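(* Let $\mathcal{V},\mathcal{W}$ be $\mathcal{K}$-operator spaces such that $\mathcal{V}$ is a bi-$\mathcal{K}$-invariant subspace of $\mathcal{W}$ (with the restricted norm). Then for every continuous bi-$\mathcal{K}$-linear map $\varphi:\mathcal{V}\to\mathcal{K}$ there is a continuous bi-$\mathcal{K}$-linear map $\bar\varphi:\mathcal{W}\to\mathcal{K}$ with $\bar\varphi|_{\mathcal{V}}=\varphi$ and $\|\bar\varphi\|=\|\varphi\|$.
   Context: $\mathcal{K}$ denotes the C*-algebra of compact operators on $\ell^2$. A $\mathcal{K}$-operator space is an essential $\mathcal{K}$-bimodule $\mathcal{V}$ with a norm that is absolutely $\mathcal{K}$-convex: whenever $v_1,v_2$ lie in the unit ball of $\mathcal{V}$, so does $\alpha_1v_1\beta_1+\alpha_2v_2\beta_2$ for all $\alpha_i,\beta_i\in\mathcal{K}$ with $\|\alpha_1\alpha_1^*+\alpha_2\alpha_2^*\|\le1$ and $\|\beta_1^*\beta_1+\beta_2^*\beta_2\|\le1$. $\mathcal{K}$ is regarded as a $\mathcal{K}$-operator space with its operator norm and multiplication. A map $\varphi$ is bi-$\mathcal{K}$-linear if $\varphi(\alpha v\beta)=\alpha\varphi(v)\beta$ for all $\alpha,\beta\in\mathcal{K}$. *)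

theory Defs
  imports "HOL-Analysis.Analysis"
begin

type_synonym vec = "nat \<Rightarrow> complex"
type_synonym op = "vec \<Rightarrow> vec"

definition l2 :: "vec set" where
  "l2 = {x. summable (\<lambda>n. (cmod (x n))\<^sup>2)}"

definition l2_norm :: "vec \<Rightarrow> real" where
  "l2_norm x = sqrt (\<Sum>n. (cmod (x n))\<^sup>2)"

definition l2_inner :: "vec \<Rightarrow> vec \<Rightarrow> complex" where
  "l2_inner x y = (\<Sum>n. x n * cnj (y n))"

definition vadd :: "vec \<Rightarrow> vec \<Rightarrow> vec" where
  "vadd x y = (\<lambda>n. x n + y n)"

definition vscale :: "complex \<Rightarrow> vec \<Rightarrow> vec" where
  "vscale c x = (\<lambda>n. c * x n)"

definition vzero :: vec where
  "vzero = (\<lambda>n. 0)"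

text \<open>Operators are functions on sequences; they are normalised to be 0 outside ell^2,
  so that two operators agreeing on ell^2 are equal.\<close>

definition bounded_op :: "op \<Rightarrow> bool" where
  "bounded_op T \<longleftrightarrow>
     (\<forall>x\<in>l2. T x \<in> l2) \<and>
     (\<forall>x. x \<notin> l2 \<longrightarrow> T x = vzero) \<and>
     (\<forall>x\<in>l2. \<forall>y\<in>l2. T (vadd x y) = vadd (T x) (T y)) \<and>
     (\<forall>c. \<forall>x\<in>l2. T (vscale c x) = vscale c (T x)) \<and>
     (\<exists>C. \<forall>x\<in>l2. l2_norm (T x) \<le> C * l2_norm x)"

definition compact_op :: "op \<Rightarrow> bool" where
  "compact_op T \<longleftrightarrow> bounded_op T \<and>
     (\<forall>e>0. \<exists>F. finite F \<and> F \<subseteq> l2 \<and>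
        (\<forall>x\<in>l2. l2_norm x \<le> 1 \<longrightarrow> (\<exists>y\<in>F. l2_norm (vadd (T x) (vscale (-1) y)) < e)))"

definition Kc :: "op set" where
  "Kc = {T. compact_op T}"

definition op_norm :: "op \<Rightarrow> real" where
  "op_norm T = Sup {l2_norm (T x) | x. x \<in> l2 \<and> l2_norm x \<le> 1}"

definition adj :: "op \<Rightarrow> op" where
  "adj T = (\<lambda>y. if y \<in> l2 then (THE z. z \<in> l2 \<and> (\<forall>x\<in>l2. l2_inner (T x) y = l2_inner x z))
               else vzero)"

definition opadd :: "op \<Rightarrow> op \<Rightarrow> op" where
  "opadd S T = (\<lambda>x. vadd (S x) (T x))"

definition opscale :: "complex \<Rightarrow> op \<Rightarrow> op" where
  "opscale c T = (\<lambda>x. vscale c (T x))"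

record 'v kspace =
  kcarrier :: "'v set"
  kzero :: "'v"
  kplus :: "'v \<Rightarrow> 'v \<Rightarrow> 'v"
  kscale :: "complex \<Rightarrow> 'v \<Rightarrow> 'v"
  lact :: "op \<Rightarrow> 'v \<Rightarrow> 'v"
  ract :: "'v \<Rightarrow> op \<Rightarrow> 'v"
  knorm :: "'v \<Rightarrow> real"

definition complex_vs :: "'v kspace \<Rightarrow> bool" where
  "complex_vs M \<longleftrightarrow> (let C = kcarrier M; p = kplus M; s = kscale M; z = kzero M in
     z \<in> C \<and>
     (\<forall>v\<in>C. \<forall>w\<in>C. p v w \<in> C) \<and>
     (\<forall>c. \<forall>v\<in>C. s c v \<in> C) \<and>
     (\<forall>u\<in>C. \<forall>v\<in>C. \<forall>w\<in>C. p (p u v) w = p u (p v w)) \<and>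
     (\<forall>v\<in>C. \<forall>w\<in>C. p v w = p w v) \<and>
     (\<forall>v\<in>C. p z v = v) \<and>
     (\<forall>v\<in>C. p v (s (-1) v) = z) \<and>
     (\<forall>c. \<forall>v\<in>C. \<forall>w\<in>C. s c (p v w) = p (s c v) (s c w)) \<and>
     (\<forall>c d. \<forall>v\<in>C. s (c + d) v = p (s c v) (s d v)) \<and>
     (\<forall>c d. \<forall>v\<in>C. s c (s d v) = s (c * d) v) \<and>
     (\<forall>v\<in>C. s 1 v = v))"

definition K_bimodule :: "'v kspace \<Rightarrow> bool" where
  "K_bimodule M \<longleftrightarrow> complex_vs M \<and>
    (let C = kcarrier M; p = kplus M; s = kscale M; l = lact M; r = ract M in
     (\<forall>a\<in>Kc. \<forall>v\<in>C. l a v \<in> C \<and> r v a \<in> C) \<and>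
     (\<forall>a\<in>Kc. \<forall>b\<in>Kc. \<forall>v\<in>C. l (a \<circ> b) v = l a (l b v) \<and> r v (a \<circ> b) = r (r v a) b) \<and>
     (\<forall>a\<in>Kc. \<forall>b\<in>Kc. \<forall>v\<in>C. l (opadd a b) v = p (l a v) (l b v)
                              \<and> r v (opadd a b) = p (r v a) (r v b)) \<and>
     (\<forall>a\<in>Kc. \<forall>v\<in>C. \<forall>w\<in>C. l a (p v w) = p (l a v) (l a w) \<and> r (p v w) a = p (r v a) (r w a)) \<and>
     (\<forall>c. \<forall>a\<in>Kc. \<forall>v\<in>C. l (opscale c a) v = s c (l a v) \<and> l a (s c v) = s c (l a v)
                        \<and> r v (opscale c a) = s c (r v a) \<and> r (s c v) a = s c (r v a)) \<and>
     (\<forall>a\<in>Kc. \<forall>b\<in>Kc. \<forall>v\<in>C. l a (r v b) = r (l a v) b))"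

definition essential :: "'v kspace \<Rightarrow> bool" where
  "essential M \<longleftrightarrow> (\<forall>v\<in>kcarrier M.
     (\<exists>a\<in>Kc. \<exists>w\<in>kcarrier M. v = lact M a w) \<and>
     (\<exists>b\<in>Kc. \<exists>w\<in>kcarrier M. v = ract M w b))"

definition is_norm :: "'v kspace \<Rightarrow> bool" where
  "is_norm M \<longleftrightarrow> (\<forall>v\<in>kcarrier M. knorm M v \<ge> 0 \<and> (knorm M v = 0 \<longleftrightarrow> v = kzero M)) \<and>
     (\<forall>c. \<forall>v\<in>kcarrier M. knorm M (kscale M c v) = cmod c * knorm M v) \<and>
     (\<forall>v\<in>kcarrier M. \<forall>w\<in>kcarrier M. knorm M (kplus M v w) \<le> knorm M v + knorm M w)"

definition abs_K_convex :: "'v kspace \<Rightarrow> bool" where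
  "abs_K_convex M \<longleftrightarrow> (\<forall>v1\<in>kcarrier M. \<forall>v2\<in>kcarrier M. \<forall>a1\<in>Kc. \<forall>a2\<in>Kc. \<forall>b1\<in>Kc. \<forall>b2\<in>Kc.
     knorm M v1 \<le> 1 \<longrightarrow> knorm M v2 \<le> 1 \<longrightarrow>
     op_norm (opadd (a1 \<circ> adj a1) (a2 \<circ> adj a2)) \<le> 1 \<longrightarrow>
     op_norm (opadd (adj b1 \<circ> b1) (adj b2 \<circ> b2)) \<le> 1 \<longrightarrow>
     knorm M (kplus M (ract M (lact M a1 v1) b1) (ract M (lact M a2 v2) b2)) \<le> 1)"

definition K_operator_space :: "'v kspace \<Rightarrow> bool" where
  "K_operator_space M \<longleftrightarrow> K_bimodule M \<and> essential M \<and> is_norm M \<and> abs_K_convex M"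

definition biK_invariant_subspace :: "'v set \<Rightarrow> 'v kspace \<Rightarrow> bool" where
  "biK_invariant_subspace V W \<longleftrightarrow> V \<subseteq> kcarrier W \<and> kzero W \<in> V \<and>
     (\<forall>v\<in>V. \<forall>w\<in>V. kplus W v w \<in> V) \<and> (\<forall>c. \<forall>v\<in>V. kscale W c v \<in> V) \<and>
     (\<forall>a\<in>Kc. \<forall>v\<in>V. lact W a v \<in> V \<and> ract W v a \<in> V)"

definition biK_linear_map :: "'v kspace \<Rightarrow> ('v \<Rightarrow> op) \<Rightarrow> bool" where
  "biK_linear_map M f \<longleftrightarrow>
     (\<forall>v\<in>kcarrier M. f v \<in> Kc) \<and>
     (\<forall>v\<in>kcarrier M. \<forall>w\<in>kcarrier M. f (kplus M v w) = opadd (f v) (f w)) \<and>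
     (\<forall>c. \<forall>v\<in>kcarrier M. f (kscale M c v) = opscale c (f v)) \<and>
     (\<forall>a\<in>Kc. \<forall>b\<in>Kc. \<forall>v\<in>kcarrier M. f (ract M (lact M a v) b) = a \<circ> f v \<circ> b)"

definition kcontinuous :: "'v kspace \<Rightarrow> ('v \<Rightarrow> op) \<Rightarrow> bool" where
  "kcontinuous M f \<longleftrightarrow> (\<forall>v\<in>kcarrier M. \<forall>e>0. \<exists>d>0. \<forall>w\<in>kcarrier M.
     knorm M (kplus M w (kscale M (-1) v)) < d \<longrightarrow> op_norm (opadd (f w) (opscale (-1) (f v))) < e)"

definition kmap_norm :: "'v kspace \<Rightarrow> ('v \<Rightarrow> op) \<Rightarrow> real" where
  "kmap_norm M f = Sup {op_norm (f v) | v. v \<in> kcarrier M \<and> knorm M v \<le> 1}"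

end

theory Submission
  imports Defs
begin

(* Let M be the norm of phi. The corner functional v |-> <phi(v) e_0, e_0> is bounded by M on V,
   so by Hahn-Banach it extends to a functional F on W with |F w| <= M |w|. Conversely, F induces
   a map psi with matrix entries <psi(w) x, y> = F(y^* w x), where y^* and x act on l2 as rank-one
   (row and column) compact operators. Absolute K-convexity gives |y^* w x| <= |y| |w| |x|, so by
   the Riesz representation psi(w) is a bounded operator of norm at most M |w|. The bimodule laws
   make psi bi-K-linear, and essentiality (w = a w' with a compact) makes psi(w) = a psi(w')
   compact. On V, bi-K-linearity of phi gives F(y^* v x) = <phi(v) x, y>, so psi extends phi, and
   the bound |psi(w)| <= M |w| forces |psi| = |phi|. *)

section \<open>Square-summable sequences\<close>

definition unit_vec :: "nat \<Rightarrow> vec" where "unit_vec k = (\<lambda>n. if n = k then 1 else 0)"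
definition trunc :: "nat \<Rightarrow> vec \<Rightarrow> vec" where "trunc m x = (\<lambda>n. if n < m then x n else 0)"
definition tail :: "nat \<Rightarrow> vec \<Rightarrow> vec" where "tail m x = (\<lambda>n. if n < m then 0 else x n)"

lemma vadd_vzero_right[simp]: "vadd x vzero = x" by (simp add: vadd_def vzero_def)
lemma vadd_vzero_left[simp]: "vadd vzero x = x" by (simp add: vadd_def vzero_def)
lemma vscale_vzero[simp]: "vscale c vzero = vzero" by (simp add: vscale_def vzero_def)
lemma vscale_zero[simp]: "vscale 0 x = vzero" by (simp add: vscale_def vzero_def)
lemma vscale_one[simp]: "vscale 1 x = x" by (simp add: vscale_def)
lemma unit_vec_same[simp]: "unit_vec k k = 1" by (simp add: unit_vec_def)
lemma vscale_vadd: "vscale c (vadd x y) = vadd (vscale c x) (vscale c y)"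
  by (simp add: vscale_def vadd_def fun_eq_iff algebra_simps)
lemma vscale_vscale: "vscale c (vscale d x) = vscale (c * d) x"
  by (simp add: vscale_def fun_eq_iff algebra_simps)
lemma vadd_scale_distrib: "vadd (vscale c x) (vscale d x) = vscale (c + d) x"
  by (simp add: vscale_def vadd_def fun_eq_iff algebra_simps)

lemma cnj_mult_self: "cnj a * a = complex_of_real ((cmod a)\<^sup>2)"
  using complex_norm_square[of a] by (simp only: mult.commute)

lemma trunc_tail: "vadd (trunc m x) (tail m x) = x"
  by (simp add: trunc_def tail_def vadd_def fun_eq_iff)

lemma trunc_Suc: "trunc (Suc m) x = vadd (trunc m x) (vscale (x m) (unit_vec m))"
  by (auto simp: trunc_def vadd_def vscale_def unit_vec_def fun_eq_iff less_Suc_eq)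

lemma trunc_0: "trunc 0 x = vzero" by (simp add: trunc_def vzero_def)

lemma l2_iff: "x \<in> l2 \<longleftrightarrow> summable (\<lambda>n. (cmod (x n))\<^sup>2)" by (simp add: l2_def)

lemma finite_support_summable:
  fixes f :: "nat \<Rightarrow> 'a::{topological_comm_monoid_add, t2_space}"
  shows "(\<And>n. n \<ge> m \<Longrightarrow> f n = 0) \<Longrightarrow> summable f"
  by (rule summable_finite[of "{..<m}"]) auto

lemma l2_vzero[simp]: "vzero \<in> l2"
  by (simp add: l2_def vzero_def)

lemma l2_unit_vec[simp]: "unit_vec k \<in> l2"
  unfolding l2_iff unit_vec_def mem_Collect_eq by (rule finite_support_summable[of "Suc k"]) auto

lemma l2_trunc[simp]: "trunc m x \<in> l2"
  unfolding l2_iff trunc_def mem_Collect_eq by (rule finite_support_summable[of m]) auto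

lemma cmod_add_square_le: "(cmod (a + b))\<^sup>2 \<le> 2 * (cmod a)\<^sup>2 + 2 * (cmod b)\<^sup>2"
proof -
  have "cmod (a+b) \<le> cmod a + cmod b" by (rule norm_triangle_ineq)
  hence "(cmod (a+b))\<^sup>2 \<le> (cmod a + cmod b)\<^sup>2" by (simp add: power_mono)
  also have "\<dots> \<le> 2 * (cmod a)\<^sup>2 + 2 * (cmod b)\<^sup>2"
  proof -
    have "0 \<le> (cmod a - cmod b)\<^sup>2" by simp
    thus ?thesis unfolding power2_diff power2_sum by linarith
  qed
  finally show ?thesis .
qed

lemma l2_vadd[simp]: "x \<in> l2 \<Longrightarrow> y \<in> l2 \<Longrightarrow> vadd x y \<in> l2"
  unfolding l2_iff vadd_def
proof -
  assume a: "summable (\<lambda>n. (cmod (x n))\<^sup>2)" "summable (\<lambda>n. (cmod (y n))\<^sup>2)"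
  have s: "summable (\<lambda>n. 2 * (cmod (x n))\<^sup>2 + 2 * (cmod (y n))\<^sup>2)"
    using a by (intro summable_add summable_mult) auto
  show "summable (\<lambda>n. (cmod (x n + y n))\<^sup>2)"
    by (rule summable_comparison_test[OF _ s]) (auto intro: cmod_add_square_le)
qed

lemma l2_vscale[simp]: "x \<in> l2 \<Longrightarrow> vscale c x \<in> l2"
  unfolding l2_iff vscale_def by (simp add: norm_mult power_mult_distrib summable_mult)

lemma l2_tail[simp]: "x \<in> l2 \<Longrightarrow> tail m x \<in> l2"
proof -
  assume "x \<in> l2"
  have "tail m x = vadd x (vscale (-1) (trunc m x))"
    by (auto simp: tail_def vadd_def vscale_def trunc_def)
  thus ?thesis using \<open>x \<in> l2\<close> by simp
qed

lemma l2_norm_nonneg[simp]: "x \<in> l2 \<Longrightarrow> l2_norm x \<ge> 0"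
  unfolding l2_norm_def l2_iff by (simp add: suminf_nonneg)

lemma l2_norm_sq: "x \<in> l2 \<Longrightarrow> (l2_norm x)\<^sup>2 = (\<Sum>n. (cmod (x n))\<^sup>2)"
  unfolding l2_norm_def l2_iff by (simp add: suminf_nonneg)

lemma l2_norm_vscale: "x \<in> l2 \<Longrightarrow> l2_norm (vscale c x) = cmod c * l2_norm x"
  unfolding l2_norm_def vscale_def l2_iff
  by (simp add: norm_mult power_mult_distrib suminf_mult real_sqrt_mult)

lemma l2_norm_vzero[simp]: "l2_norm vzero = 0"
  by (simp add: l2_norm_def vzero_def)

lemma l2_norm_zero_iff: "x \<in> l2 \<Longrightarrow> l2_norm x = 0 \<longleftrightarrow> x = vzero"
proof
  assume x: "x \<in> l2" and z: "l2_norm x = 0"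
  hence "(\<Sum>n. (cmod (x n))\<^sup>2) = 0" using l2_norm_sq by fastforce
  hence "\<forall>n. (cmod (x n))\<^sup>2 = 0" using x unfolding l2_iff
    using suminf_eq_zero_iff by fastforce
  thus "x = vzero" by (auto simp: vzero_def)
qed simp

lemma l2_coord_le: "x \<in> l2 \<Longrightarrow> cmod (x k) \<le> l2_norm x"
proof -
  assume x: "x \<in> l2"
  have "(cmod (x k))\<^sup>2 \<le> (\<Sum>n. (cmod (x n))\<^sup>2)"
    using sum_le_suminf[of "\<lambda>n. (cmod (x n))\<^sup>2" "{k}"] x by (auto simp: l2_iff)
  hence "(cmod (x k))\<^sup>2 \<le> (l2_norm x)\<^sup>2" using l2_norm_sq[OF x] by simp
  thus ?thesis by (rule power2_le_imp_le) (simp add: x)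
qed

lemma l2_norm_unit_vec[simp]: "l2_norm (unit_vec k) = 1"
proof -
  have "(\<Sum>n. (cmod (unit_vec k n))\<^sup>2) = (\<Sum>n\<in>{k}. (cmod (unit_vec k n))\<^sup>2)"
    by (rule suminf_finite) (auto simp: unit_vec_def)
  thus ?thesis by (simp add: l2_norm_def unit_vec_def)
qed

lemma l2_prod_summable:
  assumes "x \<in> l2" "y \<in> l2"
  shows "summable (\<lambda>n. cmod (x n) * cmod (y n))"
proof -
  have s: "summable (\<lambda>n. (cmod (x n))\<^sup>2 + (cmod (y n))\<^sup>2)"
    using assms by (intro summable_add) (auto simp: l2_iff)
  show ?thesis
  proof (rule summable_comparison_test[OF _ s], intro exI allI impI)
    fix n
    have "0 \<le> (cmod (x n) - cmod (y n))\<^sup>2" by simp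
    hence "2 * (cmod (x n) * cmod (y n)) \<le> (cmod (x n))\<^sup>2 + (cmod (y n))\<^sup>2"
      unfolding power2_diff by linarith
    thus "norm (cmod (x n) * cmod (y n)) \<le> (cmod (x n))\<^sup>2 + (cmod (y n))\<^sup>2"
      by (simp add: abs_mult) (smt (verit) mult_nonneg_nonneg norm_ge_zero)
  qed
qed

lemma l2_inner_summable:
  assumes "x \<in> l2" "y \<in> l2"
  shows "summable (\<lambda>n. x n * cnj (y n))"
  by (rule summable_norm_cancel, rule summable_comparison_test[OF _ l2_prod_summable[OF assms]])
     (auto simp: norm_mult)

lemma cauchy_schwarz_l2:
  assumes x: "x \<in> l2" and y: "y \<in> l2"
  shows "cmod (l2_inner x y) \<le> l2_norm x * l2_norm y"
proof -
  have s: "summable (\<lambda>n. cmod (x n) * cmod (y n))" by (rule l2_prod_summable[OF x y])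
  have "cmod (l2_inner x y) \<le> (\<Sum>n. norm (x n * cnj (y n)))"
    unfolding l2_inner_def
    by (rule summable_norm, rule summable_comparison_test[OF _ s]) (auto simp: norm_mult)
  also have "\<dots> = (\<Sum>n. cmod (x n) * cmod (y n))" by (simp add: norm_mult)
  also have "\<dots> \<le> l2_norm x * l2_norm y"
  proof (rule suminf_le_const[OF s])
    fix m
    have "(\<Sum>n<m. cmod (x n) * cmod (y n)) = (\<Sum>n<m. \<bar>cmod (x n)\<bar> * \<bar>cmod (y n)\<bar>)" by simp
    also have "\<dots> \<le> L2_set (\<lambda>n. cmod (x n)) {..<m} * L2_set (\<lambda>n. cmod (y n)) {..<m}"
      by (rule L2_set_mult_ineq)
    also have "\<dots> \<le> l2_norm x * l2_norm y"
    proof (rule mult_mono)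
      show "L2_set (\<lambda>n. cmod (x n)) {..<m} \<le> l2_norm x"
        unfolding L2_set_def l2_norm_def
        using sum_le_suminf[of "\<lambda>n. (cmod (x n))\<^sup>2" "{..<m}"] x by (auto simp: l2_iff)
      show "L2_set (\<lambda>n. cmod (y n)) {..<m} \<le> l2_norm y"
        unfolding L2_set_def l2_norm_def
        using sum_le_suminf[of "\<lambda>n. (cmod (y n))\<^sup>2" "{..<m}"] y by (auto simp: l2_iff)
    qed (auto simp: L2_set_def x intro: sum_nonneg)
    finally show "(\<Sum>n<m. cmod (x n) * cmod (y n)) \<le> l2_norm x * l2_norm y" .
  qed
  finally show ?thesis .
qed

lemma l2_inner_vadd_left: "x \<in> l2 \<Longrightarrow> y \<in> l2 \<Longrightarrow> u \<in> l2 \<Longrightarrow>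
   l2_inner (vadd x y) u = l2_inner x u + l2_inner y u"
  unfolding l2_inner_def vadd_def
  by (simp add: distrib_right suminf_add l2_inner_summable)

lemma l2_inner_vscale_left: "x \<in> l2 \<Longrightarrow> u \<in> l2 \<Longrightarrow>
   l2_inner (vscale c x) u = c * l2_inner x u"
  unfolding l2_inner_def vscale_def
  by (subst suminf_mult[symmetric]) (auto intro: l2_inner_summable simp: mult.assoc)

lemma l2_inner_vadd_right: "x \<in> l2 \<Longrightarrow> y \<in> l2 \<Longrightarrow> u \<in> l2 \<Longrightarrow>
   l2_inner u (vadd x y) = l2_inner u x + l2_inner u y"
  unfolding l2_inner_def vadd_def
  by (simp add: distrib_left suminf_add l2_inner_summable)

lemma l2_inner_vscale_right: "x \<in> l2 \<Longrightarrow> u \<in> l2 \<Longrightarrow>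
   l2_inner u (vscale c x) = cnj c * l2_inner u x"
  unfolding l2_inner_def vscale_def
  by (subst suminf_mult[symmetric]) (auto intro: l2_inner_summable simp: algebra_simps)

lemma l2_inner_unit_vec_right[simp]: "l2_inner x (unit_vec k) = x k"
proof -
  have "(\<Sum>n. x n * cnj (unit_vec k n)) = (\<Sum>n\<in>{k}. x n * cnj (unit_vec k n))"
    by (rule suminf_finite) (auto simp: unit_vec_def)
  thus ?thesis by (simp add: l2_inner_def unit_vec_def)
qed

lemma l2_inner_unit_vec_left[simp]: "l2_inner (unit_vec k) x = cnj (x k)"
proof -
  have "(\<Sum>n. unit_vec k n * cnj (x n)) = (\<Sum>n\<in>{k}. unit_vec k n * cnj (x n))"
    by (rule suminf_finite) (auto simp: unit_vec_def)
  thus ?thesis by (simp add: l2_inner_def unit_vec_def)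
qed

lemma l2_inner_vzero_left[simp]: "l2_inner vzero x = 0"
  by (simp add: l2_inner_def vzero_def)

lemma l2_inner_vzero_right[simp]: "l2_inner x vzero = 0"
  by (simp add: l2_inner_def vzero_def)

lemma l2_inner_self: "x \<in> l2 \<Longrightarrow> l2_inner x x = of_real ((l2_norm x)\<^sup>2)"
proof -
  assume x: "x \<in> l2"
  have "l2_inner x x = (\<Sum>n. of_real ((cmod (x n))\<^sup>2))"
    unfolding l2_inner_def by (simp only: complex_norm_square)
  also have "\<dots> = of_real (\<Sum>n. (cmod (x n))\<^sup>2)"
    using x by (simp add: l2_iff suminf_of_real)
  finally show ?thesis using l2_norm_sq[OF x] by simp
qed

lemma l2_inner_cnj: "x \<in> l2 \<Longrightarrow> y \<in> l2 \<Longrightarrow> l2_inner y x = cnj (l2_inner x y)"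
proof -
  assume x: "x \<in> l2" and y: "y \<in> l2"
  have "(\<lambda>n. x n * cnj (y n)) sums l2_inner x y"
    unfolding l2_inner_def using l2_inner_summable[OF x y] by (simp add: summable_sums)
  hence "(\<lambda>n. cnj (x n * cnj (y n))) sums cnj (l2_inner x y)" by (simp only: sums_cnj)
  hence "(\<lambda>n. y n * cnj (x n)) sums cnj (l2_inner x y)" by (simp add: mult.commute)
  thus ?thesis unfolding l2_inner_def by (simp add: sums_unique[symmetric])
qed

lemma tendsto_l2_norm_tail:
  assumes x: "x \<in> l2"
  shows "(\<lambda>m. l2_norm (tail m x)) \<longlonglongrightarrow> 0"
proof -
  let ?f = "\<lambda>n. (cmod (x n))\<^sup>2"
  have sf: "summable ?f" using x by (simp add: l2_iff)
  have eq: "(l2_norm (tail m x))\<^sup>2 = suminf ?f - (\<Sum>n<m. ?f n)" for m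
  proof -
    have st: "summable (\<lambda>n. (cmod (tail m x n))\<^sup>2)" using l2_tail[OF x] by (simp add: l2_iff)
    have s2: "summable (\<lambda>n. if n < m then ?f n else 0)"
      by (rule finite_support_summable[of m]) auto
    have "(\<lambda>n. ?f n) = (\<lambda>n. (if n < m then ?f n else 0) + (cmod (tail m x n))\<^sup>2)"
      by (auto simp: tail_def fun_eq_iff)
    hence "suminf ?f = (\<Sum>n. (if n < m then ?f n else 0)) + (\<Sum>n. (cmod (tail m x n))\<^sup>2)"
      using suminf_add[OF s2 st] by simp
    moreover have "(\<Sum>n. (if n < m then ?f n else 0)) = (\<Sum>n<m. ?f n)"
      by (subst suminf_finite[of "{..<m}"]) auto
    ultimately show ?thesis using l2_norm_sq[OF l2_tail[OF x]] by simp
  qed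
  have "(\<lambda>m. suminf ?f - (\<Sum>n<m. ?f n)) \<longlonglongrightarrow> suminf ?f - suminf ?f"
    by (intro tendsto_intros summable_LIMSEQ sf)
  hence "(\<lambda>m. (l2_norm (tail m x))\<^sup>2) \<longlonglongrightarrow> 0" using eq by simp
  hence "(\<lambda>m. sqrt ((l2_norm (tail m x))\<^sup>2)) \<longlonglongrightarrow> sqrt 0" by (intro tendsto_intros)
  thus ?thesis using l2_tail[OF x] by (simp add: l2_norm_nonneg)
qed

section \<open>Riesz representation of bounded functionals on \<open>\<ell>\<^sup>2\<close>\<close>

locale bounded_l2_functional =
  fixes g :: "vec \<Rightarrow> complex" and B :: real
  assumes add: "\<And>x y. x \<in> l2 \<Longrightarrow> y \<in> l2 \<Longrightarrow> g (vadd x y) = g x + g y"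
    and scale: "\<And>c x. x \<in> l2 \<Longrightarrow> g (vscale c x) = c * g x"
    and bound: "\<And>x. x \<in> l2 \<Longrightarrow> cmod (g x) \<le> B * l2_norm x"
begin

definition representer :: vec where
  "representer = (\<lambda>k. cnj (g (unit_vec k)))"

lemma g_trunc: "g (trunc m x) = (\<Sum>k<m. x k * g (unit_vec k))"
proof (induction m)
  case 0
  show ?case using scale[of vzero 0] by (simp add: trunc_0)
next
  case (Suc m)
  then show ?case by (simp add: trunc_Suc add scale)
qed

lemma representer_trunc_norm_le: "(\<Sum>k<m. (cmod (representer k))\<^sup>2) \<le> B\<^sup>2"
proof -
  define S where "S = (\<Sum>k<m. (cmod (representer k))\<^sup>2)"
  have S_nonneg: "S \<ge> 0" unfolding S_def by (simp add: sum_nonneg)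
  have "(\<Sum>n. (cmod (trunc m representer n))\<^sup>2) = (\<Sum>n<m. (cmod (trunc m representer n))\<^sup>2)"
    by (rule suminf_finite) (auto simp: trunc_def)
  hence "(l2_norm (trunc m representer))\<^sup>2 = S"
    using l2_norm_sq[OF l2_trunc] by (simp add: S_def trunc_def)
  hence norm_trunc: "l2_norm (trunc m representer) = sqrt S"
    using l2_norm_nonneg[OF l2_trunc] by (metis real_sqrt_unique)
  have "g (trunc m representer) = of_real S"
    unfolding g_trunc S_def of_real_sum
    by (rule sum.cong) (simp_all add: representer_def cnj_mult_self del: of_real_power)
  hence "S = cmod (g (trunc m representer))" using S_nonneg by simp
  also have "\<dots> \<le> B * sqrt S" using bound[OF l2_trunc, of m representer] norm_trunc by simp
  finally have "sqrt S * sqrt S \<le> B * sqrt S" using S_nonneg by simp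
  hence "sqrt S \<le> B \<or> S = 0" using S_nonneg by (metis mult_right_le_imp_le real_sqrt_gt_zero order_neq_le_trans)
  thus "(\<Sum>k<m. (cmod (representer k))\<^sup>2) \<le> B\<^sup>2"
    using S_nonneg unfolding S_def[symmetric]
    by (metis power_mono real_sqrt_ge_zero real_sqrt_pow2 zero_le_power2)
qed

lemma representer_l2: "representer \<in> l2"
  unfolding l2_iff
proof (rule bounded_imp_summable)
  show "(\<Sum>k\<le>n. (cmod (representer k))\<^sup>2) \<le> B\<^sup>2" for n
    using representer_trunc_norm_le[of "Suc n"] by (simp add: lessThan_Suc_atMost)
qed simp

lemma g_trunc_tendsto:
  assumes x: "x \<in> l2"
  shows "(\<lambda>m. g (trunc m x)) \<longlonglongrightarrow> g x"
proof -
  have "g x - g (trunc m x) = g (tail m x)" for m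
    using add[OF l2_trunc[of m x] l2_tail[OF x, of m]] trunc_tail[of m x] by simp
  hence "\<forall>\<^sub>F m in sequentially. norm (g x - g (trunc m x)) \<le> B * l2_norm (tail m x)"
    using bound[OF l2_tail[OF x]] by (simp add: always_eventually)
  moreover have "(\<lambda>m. B * l2_norm (tail m x)) \<longlonglongrightarrow> 0"
    using tendsto_mult_right_zero[OF tendsto_l2_norm_tail[OF x]] by simp
  ultimately have "(\<lambda>m. g x - g (trunc m x)) \<longlonglongrightarrow> 0"
    by (rule Lim_null_comparison)
  hence "(\<lambda>m. g x - (g x - g (trunc m x))) \<longlonglongrightarrow> g x - 0" by (intro tendsto_intros)
  thus ?thesis by simp
qed

theorem representation: "x \<in> l2 \<Longrightarrow> g x = l2_inner x representer"
proof -
  assume x: "x \<in> l2"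
  have "g (trunc m x) = (\<Sum>k<m. x k * cnj (representer k))" for m
    by (simp add: g_trunc representer_def)
  hence "(\<lambda>m. g (trunc m x)) \<longlonglongrightarrow> l2_inner x representer"
    unfolding l2_inner_def
    by (simp add: summable_LIMSEQ l2_inner_summable[OF x representer_l2])
  thus ?thesis using LIMSEQ_unique[OF g_trunc_tendsto[OF x]] by blast
qed

end

section \<open>Bounded and compact operators\<close>

lemma bounded_opI:
  assumes "\<And>x. x \<in> l2 \<Longrightarrow> T x \<in> l2" "\<And>x. x \<notin> l2 \<Longrightarrow> T x = vzero"
    "\<And>x y. x \<in> l2 \<Longrightarrow> y \<in> l2 \<Longrightarrow> T (vadd x y) = vadd (T x) (T y)"
    "\<And>c x. x \<in> l2 \<Longrightarrow> T (vscale c x) = vscale c (T x)"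
    "\<And>x. x \<in> l2 \<Longrightarrow> l2_norm (T x) \<le> C * l2_norm x"
  shows "bounded_op T"
  using assms unfolding bounded_op_def by blast

lemma bounded_opD:
  assumes "bounded_op T"
  shows "\<And>x. x \<in> l2 \<Longrightarrow> T x \<in> l2" "\<And>x. x \<notin> l2 \<Longrightarrow> T x = vzero"
    "\<And>x y. x \<in> l2 \<Longrightarrow> y \<in> l2 \<Longrightarrow> T (vadd x y) = vadd (T x) (T y)"
    "\<And>c x. x \<in> l2 \<Longrightarrow> T (vscale c x) = vscale c (T x)"
  using assms unfolding bounded_op_def by blast+

lemma bounded_op_bound:
  assumes "bounded_op T"
  obtains C where "C \<ge> 0" "\<And>x. x \<in> l2 \<Longrightarrow> l2_norm (T x) \<le> C * l2_norm x"
proof -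
  obtain C where C: "\<forall>x\<in>l2. l2_norm (T x) \<le> C * l2_norm x" using assms unfolding bounded_op_def by blast
  have "l2_norm (T x) \<le> max C 0 * l2_norm x" if "x \<in> l2" for x
  proof -
    have "C * l2_norm x \<le> max C 0 * l2_norm x" using that by (intro mult_right_mono) auto
    thus ?thesis using C that by auto
  qed
  thus ?thesis using that[of "max C 0"] by auto
qed

lemma bounded_op_vzero: "bounded_op T \<Longrightarrow> T vzero = vzero"
  using bounded_opD(4)[of T vzero 0] by simp

lemma op_norm_le:
  assumes "\<And>x. x \<in> l2 \<Longrightarrow> l2_norm (T x) \<le> B * l2_norm x" "B \<ge> 0"
  shows "op_norm T \<le> B"
  unfolding op_norm_def
proof (rule cSup_least)
  have "l2_norm (T vzero) \<in> {l2_norm (T x) | x. x \<in> l2 \<and> l2_norm x \<le> 1}"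
    by (intro CollectI exI[of _ vzero]) simp
  thus "{l2_norm (T x) | x. x \<in> l2 \<and> l2_norm x \<le> 1} \<noteq> {}"
    by (metis equals0D)
next
  fix r assume "r \<in> {l2_norm (T x) | x. x \<in> l2 \<and> l2_norm x \<le> 1}"
  then obtain x where x: "x \<in> l2" "l2_norm x \<le> 1" "r = l2_norm (T x)" by blast
  have "r \<le> B * l2_norm x" using assms(1)[OF x(1)] x(3) by simp
  also have "\<dots> \<le> B * 1" using x(2) assms(2) by (intro mult_left_mono) auto
  finally show "r \<le> B" by simp
qed

lemma op_norm_ge:
  assumes T: "bounded_op T" and x: "x \<in> l2" "l2_norm x \<le> 1"
  shows "l2_norm (T x) \<le> op_norm T"
proof -
  obtain C where C: "C \<ge> 0" "\<And>x. x \<in> l2 \<Longrightarrow> l2_norm (T x) \<le> C * l2_norm x"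
    using bounded_op_bound[OF T] by blast
  have "bdd_above {l2_norm (T x) | x. x \<in> l2 \<and> l2_norm x \<le> 1}"
  proof (rule bdd_aboveI)
    fix r assume "r \<in> {l2_norm (T x) | x. x \<in> l2 \<and> l2_norm x \<le> 1}"
    then obtain y where y: "y \<in> l2" "l2_norm y \<le> 1" "r = l2_norm (T y)" by blast
    have "r \<le> C * l2_norm y" using C(2)[OF y(1)] y(3) by simp
    also have "\<dots> \<le> C * 1" using y(2) C(1) by (intro mult_left_mono) auto
    finally show "r \<le> C" by simp
  qed
  thus ?thesis unfolding op_norm_def using x by (intro cSup_upper) auto
qed

lemma op_norm_nonneg: "bounded_op T \<Longrightarrow> op_norm T \<ge> 0"
  using op_norm_ge[of T vzero] bounded_op_vzero[of T] by simp

lemma op_norm_bound: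
  assumes T: "bounded_op T" and x: "x \<in> l2"
  shows "l2_norm (T x) \<le> op_norm T * l2_norm x"
proof (cases "l2_norm x = 0")
  case True
  hence "x = vzero" using l2_norm_zero_iff[OF x] by simp
  thus ?thesis using bounded_op_vzero[OF T] by simp
next
  case False
  hence pos: "l2_norm x > 0" using l2_norm_nonneg[OF x] by simp
  let ?u = "vscale (of_real (1 / l2_norm x)) x"
  have u: "?u \<in> l2" "l2_norm ?u \<le> 1" using x pos by (auto simp: l2_norm_vscale norm_divide)
  have "l2_norm (T ?u) = l2_norm (T x) / l2_norm x"
    using bounded_opD(4)[OF T x] bounded_opD(1)[OF T x] pos by (simp add: l2_norm_vscale norm_divide)
  hence "l2_norm (T x) / l2_norm x \<le> op_norm T" using op_norm_ge[OF T u] by simp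
  thus ?thesis using pos by (simp add: divide_le_eq)
qed

lemma bounded_op_opscale: "bounded_op T \<Longrightarrow> bounded_op (opscale c T)"
proof -
  assume T: "bounded_op T"
  obtain C where C: "C \<ge> 0" "\<And>x. x \<in> l2 \<Longrightarrow> l2_norm (T x) \<le> C * l2_norm x"
    using bounded_op_bound[OF T] by blast
  show ?thesis
  proof (rule bounded_opI[where C="cmod c * C"])
    fix x assume x: "x \<in> l2"
    show "opscale c T x \<in> l2" using bounded_opD(1)[OF T x] by (simp add: opscale_def)
    show "l2_norm (opscale c T x) \<le> cmod c * C * l2_norm x"
      using bounded_opD(1)[OF T x] C(2)[OF x]
      by (simp add: opscale_def l2_norm_vscale mult.assoc mult_left_mono)
  next
    fix x assume "x \<notin> l2" thus "opscale c T x = vzero" using bounded_opD(2)[OF T] by (simp add: opscale_def)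
  next
    fix x y assume "x \<in> l2" "y \<in> l2"
    thus "opscale c T (vadd x y) = vadd (opscale c T x) (opscale c T y)"
      using bounded_opD(3)[OF T] by (simp add: opscale_def vscale_vadd)
  next
    fix d x assume "x \<in> l2"
    thus "opscale c T (vscale d x) = vscale d (opscale c T x)"
      using bounded_opD(4)[OF T] by (simp add: opscale_def vscale_vscale mult.commute)
  qed
qed

lemma op_norm_opscale:
  assumes T: "bounded_op T"
  shows "op_norm (opscale c T) = cmod c * op_norm T"
proof (rule antisym)
  show "op_norm (opscale c T) \<le> cmod c * op_norm T"
  proof (rule op_norm_le)
    fix x assume x: "x \<in> l2"
    show "l2_norm (opscale c T x) \<le> cmod c * op_norm T * l2_norm x"
      using op_norm_bound[OF T x] bounded_opD(1)[OF T x]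
      by (simp add: opscale_def l2_norm_vscale mult.assoc mult_left_mono)
  qed (simp add: op_norm_nonneg[OF T])
next
  show "cmod c * op_norm T \<le> op_norm (opscale c T)"
  proof (cases "c = 0")
    case True thus ?thesis using op_norm_nonneg[OF bounded_op_opscale[OF T, of c]] by simp
  next
    case False
    hence cp: "cmod c > 0" by simp
    have "op_norm T \<le> op_norm (opscale c T) / cmod c"
    proof (rule op_norm_le)
      fix x assume x: "x \<in> l2"
      have "cmod c * l2_norm (T x) = l2_norm (opscale c T x)"
        using bounded_opD(1)[OF T x] by (simp add: opscale_def l2_norm_vscale)
      also have "\<dots> \<le> op_norm (opscale c T) * l2_norm x"
        by (rule op_norm_bound[OF bounded_op_opscale[OF T] x])
      finally show "l2_norm (T x) \<le> op_norm (opscale c T) / cmod c * l2_norm x"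
        using cp by (simp add: field_simps)
    qed (use op_norm_nonneg[OF bounded_op_opscale[OF T, of c]] cp in simp)
    thus ?thesis using cp by (simp add: field_simps)
  qed
qed

lemma bounded_op_comp:
  assumes a: "bounded_op a" and T: "bounded_op T"
  shows "bounded_op (a \<circ> T)"
proof -
  obtain C where C: "C \<ge> 0" "\<And>x. x \<in> l2 \<Longrightarrow> l2_norm (a x) \<le> C * l2_norm x"
    using bounded_op_bound[OF a] by blast
  obtain D where D: "D \<ge> 0" "\<And>x. x \<in> l2 \<Longrightarrow> l2_norm (T x) \<le> D * l2_norm x"
    using bounded_op_bound[OF T] by blast
  show ?thesis
  proof (rule bounded_opI[where C="C * D"])
    fix x assume x: "x \<in> l2"
    show "(a \<circ> T) x \<in> l2" using x bounded_opD(1)[OF a] bounded_opD(1)[OF T] by simp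
    have "l2_norm (a (T x)) \<le> C * l2_norm (T x)" using C(2) bounded_opD(1)[OF T x] by simp
    also have "\<dots> \<le> C * (D * l2_norm x)" using D(2)[OF x] C(1) by (rule mult_left_mono)
    finally show "l2_norm ((a \<circ> T) x) \<le> C * D * l2_norm x" by (simp add: mult.assoc)
  next
    fix x assume "x \<notin> l2" thus "(a \<circ> T) x = vzero"
      using bounded_opD(2)[OF T] bounded_op_vzero[OF a] by simp
  next
    fix x y assume "x \<in> l2" "y \<in> l2"
    thus "(a \<circ> T) (vadd x y) = vadd ((a \<circ> T) x) ((a \<circ> T) y)"
      using bounded_opD(3)[OF T] bounded_opD(3)[OF a] bounded_opD(1)[OF T] by simp
  next
    fix d x assume "x \<in> l2"
    thus "(a \<circ> T) (vscale d x) = vscale d ((a \<circ> T) x)"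
      using bounded_opD(4)[OF T] bounded_opD(4)[OF a] bounded_opD(1)[OF T] by simp
  qed
qed

lemma compact_rank_one:
  assumes T: "bounded_op T" and u: "u \<in> l2"
    and R: "\<And>x. x \<in> l2 \<Longrightarrow> l2_norm x \<le> 1 \<Longrightarrow> \<exists>c. cmod c \<le> R \<and> T x = vscale c u"
  shows "compact_op T"
  unfolding compact_op_def
proof (intro conjI allI impI)
  show "bounded_op T" by (rule T)
  fix e :: real assume e: "e > 0"
  define d where "d = e / (l2_norm u + 1)"
  have d: "d > 0" using e l2_norm_nonneg[OF u] by (simp add: d_def)
  have cov: "cball 0 R \<subseteq> (\<Union>c\<in>cball (0::complex) R. ball c d)" using d by auto
  obtain D where D: "D \<subseteq> cball (0::complex) R" "finite D" "cball 0 R \<subseteq> (\<Union>c\<in>D. ball c d)"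
    by (rule compactE_image[OF compact_cball open_ball cov])
  show "\<exists>F. finite F \<and> F \<subseteq> l2 \<and> (\<forall>x\<in>l2. l2_norm x \<le> 1 \<longrightarrow>
          (\<exists>y\<in>F. l2_norm (vadd (T x) (vscale (- 1) y)) < e))"
  proof (intro exI[of _ "(\<lambda>c. vscale c u) ` D"] conjI ballI impI)
    show "finite ((\<lambda>c. vscale c u) ` D)" using D(2) by simp
    show "(\<lambda>c. vscale c u) ` D \<subseteq> l2" using u by auto
    fix x assume x: "x \<in> l2" "l2_norm x \<le> 1"
    obtain c where c: "cmod c \<le> R" "T x = vscale c u" using R[OF x] by blast
    have "c \<in> cball 0 R" using c(1) by simp
    then obtain b where b: "b \<in> D" "c \<in> ball b d" using D(3) by blast
    have cb: "cmod (c - b) < d" using b(2) by (simp add: dist_norm norm_minus_commute)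
    have "vadd (T x) (vscale (- 1) (vscale b u)) = vscale (c - b) u"
      by (simp add: c(2) vscale_def vadd_def fun_eq_iff algebra_simps)
    hence "l2_norm (vadd (T x) (vscale (- 1) (vscale b u))) = cmod (c - b) * l2_norm u"
      using u by (simp add: l2_norm_vscale)
    also have "\<dots> \<le> d * l2_norm u" using cb l2_norm_nonneg[OF u] by (intro mult_right_mono) auto
    also have "\<dots> < e"
    proof -
      have "d * l2_norm u = e * (l2_norm u / (l2_norm u + 1))" by (simp add: d_def)
      also have "\<dots> < e * 1" using e l2_norm_nonneg[OF u] by (intro mult_strict_left_mono) auto
      finally show ?thesis by simp
    qed
    finally show "\<exists>y\<in>(\<lambda>c. vscale c u) ` D. l2_norm (vadd (T x) (vscale (- 1) y)) < e"
      using b(1) by blast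
  qed
qed

lemma vadd_neg_vscale: "vadd (vscale K u) (vscale (-1) (vscale K y)) = vscale K (vadd u (vscale (-1) y))"
  by (simp add: vscale_def vadd_def fun_eq_iff algebra_simps)

lemma compact_op_net:
  assumes a: "compact_op a" and K: "K > 0" and e: "e > 0"
  obtains F where "finite F" "F \<subseteq> l2"
    "\<And>x. x \<in> l2 \<Longrightarrow> l2_norm x \<le> K \<Longrightarrow> \<exists>y\<in>F. l2_norm (vadd (a x) (vscale (-1) y)) < e"
proof -
  have ab: "bounded_op a" using a by (simp add: compact_op_def)
  have "\<exists>F. finite F \<and> F \<subseteq> l2 \<and> (\<forall>x\<in>l2. l2_norm x \<le> 1 \<longrightarrow>
          (\<exists>y\<in>F. l2_norm (vadd (a x) (vscale (- 1) y)) < e / K))"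
    using a divide_pos_pos[OF e K] unfolding compact_op_def by simp
  then obtain F where F: "finite F" "F \<subseteq> l2"
    "\<And>x. x \<in> l2 \<Longrightarrow> l2_norm x \<le> 1 \<Longrightarrow> \<exists>y\<in>F. l2_norm (vadd (a x) (vscale (-1) y)) < e / K"
    by blast
  show ?thesis
  proof
    show "finite (vscale (of_real K) ` F)" "vscale (of_real K) ` F \<subseteq> l2" using F(1,2) by auto
    fix x assume x: "x \<in> l2" "l2_norm x \<le> K"
    let ?u = "vscale (of_real (1 / K)) x"
    have u: "?u \<in> l2" "l2_norm ?u \<le> 1" using x K by (auto simp: l2_norm_vscale norm_divide)
    obtain y where y: "y \<in> F" "l2_norm (vadd (a ?u) (vscale (-1) y)) < e / K"
      using F(3)[OF u] by blast
    have "a x = vscale (of_real K) (a ?u)"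
      using bounded_opD(4)[OF ab u(1), of "of_real K"] K by (simp add: vscale_vscale)
    hence "l2_norm (vadd (a x) (vscale (-1) (vscale (of_real K) y)))
        = K * l2_norm (vadd (a ?u) (vscale (-1) y))"
      using K y(1) F(2) bounded_opD(1)[OF ab u(1)] by (auto simp: vadd_neg_vscale l2_norm_vscale)
    also have "\<dots> < e" using y(2) K by (simp add: field_simps)
    finally show "\<exists>y\<in>vscale (of_real K) ` F. l2_norm (vadd (a x) (vscale (-1) y)) < e"
      using y(1) by blast
  qed
qed

lemma compact_comp:
  assumes a: "compact_op a" and T: "bounded_op T"
  shows "compact_op (a \<circ> T)"
  unfolding compact_op_def
proof (intro conjI allI impI)
  show "bounded_op (a \<circ> T)" using a T by (simp add: compact_op_def bounded_op_comp)
  fix e :: real assume e: "e > 0"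
  obtain C where C: "C \<ge> 0" "\<And>x. x \<in> l2 \<Longrightarrow> l2_norm (T x) \<le> C * l2_norm x"
    using bounded_op_bound[OF T] by blast
  obtain F where F: "finite F" "F \<subseteq> l2"
    "\<And>x. x \<in> l2 \<Longrightarrow> l2_norm x \<le> C + 1 \<Longrightarrow> \<exists>y\<in>F. l2_norm (vadd (a x) (vscale (-1) y)) < e"
    using compact_op_net[OF a _ e, of "C + 1"] C(1) by (metis add_nonneg_pos zero_less_one)
  have T_ball: "l2_norm (T x) \<le> C + 1" if "x \<in> l2" "l2_norm x \<le> 1" for x
    using C(2)[OF that(1)] mult_left_mono[OF that(2) C(1)] by simp
  show "\<exists>F. finite F \<and> F \<subseteq> l2 \<and> (\<forall>x\<in>l2. l2_norm x \<le> 1 \<longrightarrow>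
          (\<exists>y\<in>F. l2_norm (vadd ((a \<circ> T) x) (vscale (- 1) y)) < e))"
  proof (intro exI conjI ballI impI)
    fix x assume "x \<in> l2" "l2_norm x \<le> 1"
    thus "\<exists>y\<in>F. l2_norm (vadd ((a \<circ> T) x) (vscale (- 1) y)) < e"
      using F(3) bounded_opD(1)[OF T] T_ball by simp
  qed (use F in auto)
qed

lemma Kc_bounded: "a \<in> Kc \<Longrightarrow> bounded_op a" by (simp add: Kc_def compact_op_def)

section \<open>Rank-one operators\<close>

text \<open>\<open>row_op y\<close> and \<open>col_op x\<close> are the rank-one operators whose matrices have \<open>y\<^sup>*\<close> as their
  row \<open>0\<close> and \<open>x\<close> as their column \<open>0\<close>.\<close>

definition zero_op :: op where "zero_op = (\<lambda>x. vzero)"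
definition row_op :: "vec \<Rightarrow> op" where
  "row_op y = (\<lambda>x. if x \<in> l2 then vscale (l2_inner x y) (unit_vec 0) else vzero)"
definition col_op :: "vec \<Rightarrow> op" where
  "col_op y = (\<lambda>x. if x \<in> l2 then vscale (x 0) y else vzero)"

lemma row_op_l2: "x \<in> l2 \<Longrightarrow> row_op y x = vscale (l2_inner x y) (unit_vec 0)"
  by (simp add: row_op_def)
lemma col_op_l2: "x \<in> l2 \<Longrightarrow> col_op y x = vscale (x 0) y"
  by (simp add: col_op_def)

lemma row_op_bounded:
  assumes y: "y \<in> l2" shows "bounded_op (row_op y)"
proof (rule bounded_opI[where C="l2_norm y"])
  fix x assume x: "x \<in> l2"
  show "row_op y x \<in> l2" using x by (simp add: row_op_l2)
  show "l2_norm (row_op y x) \<le> l2_norm y * l2_norm x"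
    using x cauchy_schwarz_l2[OF x y] by (simp add: row_op_l2 l2_norm_vscale mult.commute)
next
  fix x assume "x \<notin> l2" thus "row_op y x = vzero" by (simp add: row_op_def)
next
  fix x x' assume x: "x \<in> l2" "x' \<in> l2"
  thus "row_op y (vadd x x') = vadd (row_op y x) (row_op y x')"
    by (simp add: row_op_l2 l2_inner_vadd_left y vadd_scale_distrib)
next
  fix c x assume x: "x \<in> l2"
  thus "row_op y (vscale c x) = vscale c (row_op y x)"
    by (simp add: row_op_l2 l2_inner_vscale_left y vscale_vscale)
qed

lemma row_op_Kc: assumes y: "y \<in> l2" shows "row_op y \<in> Kc"
  unfolding Kc_def mem_Collect_eq
proof (rule compact_rank_one[OF row_op_bounded[OF y], where u="unit_vec 0" and R="l2_norm y"])
  fix x assume x: "x \<in> l2" "l2_norm x \<le> 1"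
  have "cmod (l2_inner x y) \<le> l2_norm x * l2_norm y" by (rule cauchy_schwarz_l2[OF x(1) y])
  also have "\<dots> \<le> 1 * l2_norm y" using x(2) l2_norm_nonneg[OF y] by (intro mult_right_mono) auto
  finally show "\<exists>c. cmod c \<le> l2_norm y \<and> row_op y x = vscale c (unit_vec 0)"
    using x(1) by (auto simp: row_op_l2)
qed simp

lemma col_op_bounded:
  assumes y: "y \<in> l2" shows "bounded_op (col_op y)"
proof (rule bounded_opI[where C="l2_norm y"])
  fix x assume x: "x \<in> l2"
  show "col_op y x \<in> l2" using x y by (simp add: col_op_l2)
  have "cmod (x 0) * l2_norm y \<le> l2_norm x * l2_norm y"
    using l2_coord_le[OF x, of 0] l2_norm_nonneg[OF y] by (rule mult_right_mono)
  thus "l2_norm (col_op y x) \<le> l2_norm y * l2_norm x"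
    using x y by (simp add: col_op_l2 l2_norm_vscale mult.commute)
next
  fix x assume "x \<notin> l2" thus "col_op y x = vzero" by (simp add: col_op_def)
next
  fix x x' assume x: "x \<in> l2" "x' \<in> l2"
  thus "col_op y (vadd x x') = vadd (col_op y x) (col_op y x')"
    by (simp add: col_op_l2 vadd_scale_distrib) (simp add: vadd_def)
next
  fix c x assume x: "x \<in> l2"
  thus "col_op y (vscale c x) = vscale c (col_op y x)"
    by (simp add: col_op_l2 vscale_vscale) (simp add: vscale_def)
qed

lemma col_op_Kc: assumes y: "y \<in> l2" shows "col_op y \<in> Kc"
  unfolding Kc_def mem_Collect_eq
proof (rule compact_rank_one[OF col_op_bounded[OF y], where u="y" and R="1"])
  fix x assume x: "x \<in> l2" "l2_norm x \<le> 1"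
  have "cmod (x 0) \<le> 1" using l2_coord_le[OF x(1), of 0] x(2) by simp
  thus "\<exists>c. cmod c \<le> 1 \<and> col_op y x = vscale c y"
    using x(1) by (auto simp: col_op_l2)
qed (rule y)

lemma zero_op_apply[simp]: "zero_op x = vzero" by (simp add: zero_op_def)

lemma zero_op_bounded: "bounded_op zero_op"
  by (rule bounded_opI[where C=0]) (auto simp: zero_op_def)

lemma zero_op_Kc: "zero_op \<in> Kc"
  unfolding Kc_def mem_Collect_eq
  by (rule compact_rank_one[OF zero_op_bounded, where u=vzero and R=0]) (auto simp: zero_op_def)

lemma row_op_vadd: "y \<in> l2 \<Longrightarrow> y' \<in> l2 \<Longrightarrow> row_op (vadd y y') = opadd (row_op y) (row_op y')"
  by (auto simp: fun_eq_iff row_op_def opadd_def l2_inner_vadd_right vadd_scale_distrib)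

lemma row_op_vscale: "y \<in> l2 \<Longrightarrow> row_op (vscale c y) = opscale (cnj c) (row_op y)"
  by (auto simp: fun_eq_iff row_op_def opscale_def l2_inner_vscale_right vscale_vscale)

lemma col_op_vadd: "col_op (vadd y y') = opadd (col_op y) (col_op y')"
  by (auto simp: fun_eq_iff col_op_def opadd_def vscale_vadd)

lemma col_op_vscale: "col_op (vscale c y) = opscale c (col_op y)"
  by (auto simp: fun_eq_iff col_op_def opscale_def vscale_vscale mult.commute)

lemma row_op_comp:
  assumes a: "a \<in> Kc"
  obtains z where "z \<in> l2" "row_op (unit_vec i) \<circ> a = row_op z"
proof -
  have ab: "bounded_op a" by (rule Kc_bounded[OF a])
  obtain C where C: "C \<ge> 0" "\<And>x. x \<in> l2 \<Longrightarrow> l2_norm (a x) \<le> C * l2_norm x"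
    using bounded_op_bound[OF ab] by blast
  interpret entry: bounded_l2_functional "\<lambda>x. a x i" C
  proof
    fix x assume x: "x \<in> l2"
    show "cmod (a x i) \<le> C * l2_norm x"
      using l2_coord_le[OF bounded_opD(1)[OF ab x]] C(2)[OF x] by (rule order_trans)
  qed (use bounded_opD(3,4)[OF ab] in \<open>simp_all add: vadd_def vscale_def\<close>)
  have "row_op (unit_vec i) \<circ> a = row_op entry.representer"
  proof
    fix x show "(row_op (unit_vec i) \<circ> a) x = row_op entry.representer x"
      using bounded_opD(1,2)[OF ab, of x] entry.representation[of x]
      by (cases "x \<in> l2") (simp_all add: row_op_def vzero_def)
  qed
  with entry.representer_l2 show ?thesis using that by blast
qed

lemma adj_char:
  assumes y: "y \<in> l2" and z: "z \<in> l2" and h: "\<And>x. x \<in> l2 \<Longrightarrow> l2_inner (T x) y = l2_inner x z"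
  shows "adj T y = z"
proof -
  have "(THE z. z \<in> l2 \<and> (\<forall>x\<in>l2. l2_inner (T x) y = l2_inner x z)) = z"
  proof (rule the_equality)
    show "z \<in> l2 \<and> (\<forall>x\<in>l2. l2_inner (T x) y = l2_inner x z)" using z h by blast
  next
    fix z' assume z': "z' \<in> l2 \<and> (\<forall>x\<in>l2. l2_inner (T x) y = l2_inner x z')"
    have "cnj (z' k) = cnj (z k)" for k
      using z' h[of "unit_vec k"] by simp
    thus "z' = z" by (simp add: fun_eq_iff)
  qed
  thus ?thesis using y by (simp add: adj_def)
qed

lemma adj_row_op:
  assumes y: "y \<in> l2" and w: "w \<in> l2"
  shows "adj (row_op y) w = vscale (w 0) y"
proof (rule adj_char[OF w])
  show "vscale (w 0) y \<in> l2" using y by simp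
  fix x assume x: "x \<in> l2"
  show "l2_inner (row_op y x) w = l2_inner x (vscale (w 0) y)"
    using x y w by (simp add: row_op_l2 l2_inner_vscale_left l2_inner_vscale_right mult.commute)
qed

lemma adj_col_op:
  assumes y: "y \<in> l2" and w: "w \<in> l2"
  shows "adj (col_op y) w = vscale (l2_inner w y) (unit_vec 0)"
proof (rule adj_char[OF w])
  show "vscale (l2_inner w y) (unit_vec 0) \<in> l2" by simp
  fix x assume x: "x \<in> l2"
  show "l2_inner (col_op y x) w = l2_inner x (vscale (l2_inner w y) (unit_vec 0))"
    using x y w by (simp add: col_op_l2 l2_inner_vscale_left l2_inner_vscale_right
        l2_inner_cnj[OF y w] mult.commute)
qed

lemma adj_zero_op: "w \<in> l2 \<Longrightarrow> adj zero_op w = vzero"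
  by (rule adj_char) (auto simp: zero_op_def)

lemma opadd_zero_op_comp: "opadd T (zero_op \<circ> S) = T"
  by (simp add: fun_eq_iff opadd_def zero_op_def)

lemma opadd_adj_zero_op_comp: "opadd T (adj zero_op \<circ> zero_op) = T"
  by (simp add: fun_eq_iff opadd_def adj_zero_op)

lemma rank_one_square_norm_le:
  assumes y: "y \<in> l2" "l2_norm y \<le> 1" and w: "w \<in> l2"
  shows "l2_norm (vscale (w 0 * of_real ((l2_norm y)\<^sup>2)) (unit_vec 0)) \<le> 1 * l2_norm w"
proof -
  have "l2_norm (vscale (w 0 * of_real ((l2_norm y)\<^sup>2)) (unit_vec 0)) = cmod (w 0) * (l2_norm y)\<^sup>2"
    by (simp add: l2_norm_vscale norm_mult norm_power)
  also have "\<dots> \<le> l2_norm w * 1"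
    using l2_coord_le[OF w, of 0] y l2_norm_nonneg[OF y(1)] l2_norm_nonneg[OF w]
    by (intro mult_mono) (auto simp: power_le_one)
  finally show ?thesis by simp
qed

text \<open>The two estimates below are padded with \<open>zero_op\<close> to match the hypotheses of absolute
  \<open>\<K>\<close>-convexity, which is applied with a vanishing second summand.\<close>

lemma op_norm_row_op_square_le:
  assumes y: "y \<in> l2" "l2_norm y \<le> 1"
  shows "op_norm (opadd (row_op y \<circ> adj (row_op y)) (zero_op \<circ> adj zero_op)) \<le> 1"
  unfolding opadd_zero_op_comp
proof (rule op_norm_le)
  fix w assume w: "w \<in> l2"
  have "(row_op y \<circ> adj (row_op y)) w = vscale (w 0 * of_real ((l2_norm y)\<^sup>2)) (unit_vec 0)"
    using y w by (simp add: adj_row_op row_op_l2 l2_inner_vscale_left l2_inner_self)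
  thus "l2_norm ((row_op y \<circ> adj (row_op y)) w) \<le> 1 * l2_norm w"
    using rank_one_square_norm_le[OF y w] by simp
qed simp

lemma op_norm_col_op_square_le:
  assumes y: "y \<in> l2" "l2_norm y \<le> 1"
  shows "op_norm (opadd (adj (col_op y) \<circ> col_op y) (adj zero_op \<circ> zero_op)) \<le> 1"
  unfolding opadd_adj_zero_op_comp
proof (rule op_norm_le)
  fix w assume w: "w \<in> l2"
  have "(adj (col_op y) \<circ> col_op y) w = vscale (w 0 * of_real ((l2_norm y)\<^sup>2)) (unit_vec 0)"
    using y w by (simp add: adj_col_op col_op_l2 l2_inner_vscale_left l2_inner_self)
  thus "l2_norm ((adj (col_op y) \<circ> col_op y) w) \<le> 1 * l2_norm w"
    using rank_one_square_norm_le[OF y w] by simp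
qed simp

lemma opscale_zero: "opscale 0 T = zero_op" by (simp add: fun_eq_iff opscale_def)

lemma row_op_vzero: "row_op vzero = zero_op"
  by (simp add: fun_eq_iff row_op_def)

lemma col_op_vzero: "col_op vzero = zero_op"
  by (simp add: fun_eq_iff col_op_def)

lemma op_norm_zero_op: "op_norm zero_op = 0"
  using op_norm_le[of zero_op 0] op_norm_nonneg[OF zero_op_bounded] by simp

lemma comp_col_op: "bounded_op b \<Longrightarrow> x \<in> l2 \<Longrightarrow> b \<circ> col_op x = col_op (b x)"
  by (auto simp: fun_eq_iff col_op_def bounded_opD(4) bounded_op_vzero)

section \<open>The Hahn-Banach theorem on carrier vector spaces\<close>

locale carrier_vs =
  fixes C :: "'v set" and p :: "'v \<Rightarrow> 'v \<Rightarrow> 'v" and s :: "complex \<Rightarrow> 'v \<Rightarrow> 'v" and z :: 'v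
  assumes zero_closed[simp]: "z \<in> C"
    and add_closed[simp]: "\<And>v w. v \<in> C \<Longrightarrow> w \<in> C \<Longrightarrow> p v w \<in> C"
    and scale_closed[simp]: "\<And>c v. v \<in> C \<Longrightarrow> s c v \<in> C"
    and add_assoc: "\<And>u v w. u \<in> C \<Longrightarrow> v \<in> C \<Longrightarrow> w \<in> C \<Longrightarrow> p (p u v) w = p u (p v w)"
    and add_commute: "\<And>v w. v \<in> C \<Longrightarrow> w \<in> C \<Longrightarrow> p v w = p w v"
    and add_zero_left[simp]: "\<And>v. v \<in> C \<Longrightarrow> p z v = v"
    and add_neg: "\<And>v. v \<in> C \<Longrightarrow> p v (s (-1) v) = z"
    and scale_add_right: "\<And>c v w. v \<in> C \<Longrightarrow> w \<in> C \<Longrightarrow> s c (p v w) = p (s c v) (s c w)"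
    and scale_add_left: "\<And>c d v. v \<in> C \<Longrightarrow> s (c + d) v = p (s c v) (s d v)"
    and scale_scale[simp]: "\<And>c d v. v \<in> C \<Longrightarrow> s c (s d v) = s (c * d) v"
    and scale_one[simp]: "\<And>v. v \<in> C \<Longrightarrow> s 1 v = v"
begin

lemma add_left_commute: "u \<in> C \<Longrightarrow> v \<in> C \<Longrightarrow> w \<in> C \<Longrightarrow> p u (p v w) = p v (p u w)"
  by (metis add_assoc add_commute)

lemma add_zero_right[simp]: "v \<in> C \<Longrightarrow> p v z = v"
  using add_commute[of v z] by simp

lemma neg_add: "v \<in> C \<Longrightarrow> p (s (-1) v) v = z"
  using add_commute[of v "s (-1) v"] add_neg[of v] by simp

lemma add_idem_imp_zero: assumes x: "x \<in> C" and e: "p x x = x" shows "x = z"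
proof -
  have "z = p (p x x) (s (-1) x)" using add_neg[OF x] e by simp
  also have "\<dots> = x" using x by (simp add: add_assoc add_neg)
  finally show ?thesis by simp
qed

lemma scale_zero_left[simp]: "v \<in> C \<Longrightarrow> s 0 v = z"
  using scale_add_left[of v 0 0] add_idem_imp_zero[of "s 0 v"] by simp

lemma scale_zero_right[simp]: "s c z = z"
  using scale_scale[of z c 0] scale_zero_left[of z] by simp

lemma add_eq_zero_imp_neg: assumes u: "u \<in> C" and v: "v \<in> C" and e: "p u v = z" shows "v = s (-1) u"
proof -
  have "v = p (p (s (-1) u) u) v" using neg_add[OF u] v by simp
  also have "\<dots> = s (-1) u" using e u v by (simp add: add_assoc)
  finally show ?thesis .
qed

lemma diff_eq_zero_imp_eq: assumes a: "a \<in> C" and b: "b \<in> C" and e: "p a (s (-1) b) = z" shows "a = b"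
proof -
  have "s (-1) (s (-1) b) = s (-1) (s (-1) a)" using add_eq_zero_imp_neg[OF a _ e] b by simp
  thus ?thesis using a b by simp
qed

lemma add_scale_same: "v \<in> C \<Longrightarrow> p (s c v) (s d v) = s (c + d) v"
  using scale_add_left by simp

lemma add_scale_collect:
  assumes "x \<in> C" "y \<in> C" "w \<in> C"
  shows "p (p x (s (of_real t) w)) (p y (s (of_real r) w)) = p (p x y) (s (of_real (t + r)) w)"
  using assms by (simp add: add_assoc add_left_commute add_scale_same)

lemma diff_scale_collect:
  assumes x: "x \<in> C" and x': "x' \<in> C" and w: "w \<in> C"
    and e: "p x (s (of_real t) w) = p x' (s (of_real t') w)"
  shows "p (p x (s (-1) x')) (s (of_real (t - t')) w) = z"
proof -
  let ?R = "p x' (s (of_real t') w)"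
  have "z = p ?R (s (-1) ?R)" using add_neg x' w by simp
  also have "s (-1) ?R = p (s (-1) x') (s (of_real (- t')) w)" using x' w by (simp add: scale_add_right)
  also have "p ?R (p (s (-1) x') (s (of_real (- t')) w))
      = p (p x (s (-1) x')) (p (s (of_real t) w) (s (of_real (- t')) w))"
    using x x' w by (simp add: e[symmetric] add_assoc add_left_commute)
  also have "p (s (of_real t) w) (s (of_real (- t')) w) = s (of_real (t - t')) w"
    using w by (simp add: add_scale_same)
  finally show ?thesis by simp
qed

end

lemma complex_vs_imp_carrier_vs:
  assumes "complex_vs M"
  shows "carrier_vs (kcarrier M) (kplus M) (kscale M) (kzero M)"
  using assms unfolding complex_vs_def Let_def
  by unfold_locales (elim conjE; metis)+

locale seminormed_carrier_vs = carrier_vs +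
  fixes q :: "'v \<Rightarrow> real"
  assumes seminorm_nonneg: "\<And>v. v \<in> C \<Longrightarrow> q v \<ge> 0"
    and seminorm_triangle: "\<And>v w. v \<in> C \<Longrightarrow> w \<in> C \<Longrightarrow> q (p v w) \<le> q v + q w"
    and seminorm_scale: "\<And>c v. v \<in> C \<Longrightarrow> q (s c v) = cmod c * q v"
begin

text \<open>Real-linear extensions of \<open>g\<close> dominated by \<open>q\<close> are handled through their graphs, so that
  Zorn's lemma can be applied to set inclusion.\<close>

definition hb_graph :: "'v set \<Rightarrow> ('v \<Rightarrow> real) \<Rightarrow> ('v \<times> real) set \<Rightarrow> bool" where
  "hb_graph V g H \<longleftrightarrow>
     (\<forall>x a b. (x, a) \<in> H \<longrightarrow> (x, b) \<in> H \<longrightarrow> a = b) \<and>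
     (\<forall>x a. (x, a) \<in> H \<longrightarrow> x \<in> C \<and> a \<le> q x) \<and>
     (\<forall>v\<in>V. (v, g v) \<in> H) \<and>
     (\<forall>x a y b. (x, a) \<in> H \<longrightarrow> (y, b) \<in> H \<longrightarrow> (p x y, a + b) \<in> H) \<and>
     (\<forall>x a t. (x, a) \<in> H \<longrightarrow> (s (of_real t) x, t * a) \<in> H)"

lemma hb_graphD:
  assumes "hb_graph V g H"
  shows "\<And>x a b. (x, a) \<in> H \<Longrightarrow> (x, b) \<in> H \<Longrightarrow> a = b"
    "\<And>x a. (x, a) \<in> H \<Longrightarrow> x \<in> C" "\<And>x a. (x, a) \<in> H \<Longrightarrow> a \<le> q x"
    "\<And>v. v \<in> V \<Longrightarrow> (v, g v) \<in> H"
    "\<And>x a y b. (x, a) \<in> H \<Longrightarrow> (y, b) \<in> H \<Longrightarrow> (p x y, a + b) \<in> H"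
    "\<And>x a t. (x, a) \<in> H \<Longrightarrow> (s (of_real t) x, t * a) \<in> H"
  using assms unfolding hb_graph_def by blast+

lemma hb_graph_zero:
  assumes H: "hb_graph V g H" and zV: "z \<in> V"
  shows "(z, 0) \<in> H"
  using hb_graphD(6)[OF H hb_graphD(4)[OF H zV], of 0] by simp

lemma hb_separating_constant:
  assumes H: "hb_graph V g M" and zV: "z \<in> V" and w: "w \<in> C"
  obtains c where "\<And>y b. (y, b) \<in> M \<Longrightarrow> b - q (p y (s (-1) w)) \<le> c"
    and "\<And>y b. (y, b) \<in> M \<Longrightarrow> c \<le> q (p y w) - b"
proof -
  have sep: "b - q (p y (s (-1) w)) \<le> q (p y' w) - b'" if yb: "(y, b) \<in> M" "(y', b') \<in> M" for y b y' b'
  proof -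
    have y: "y \<in> C" "y' \<in> C" using hb_graphD(2)[OF H] yb by auto
    have "p (p y (s (-1) w)) (p y' w) = p (p y y') (p (s (-1) w) w)"
      using y w by (simp add: add_assoc add_left_commute)
    hence "p y y' = p (p y (s (-1) w)) (p y' w)" using y w by (simp add: neg_add)
    hence "b + b' \<le> q (p (p y (s (-1) w)) (p y' w))"
      using hb_graphD(3,5)[OF H] yb by metis
    also have "\<dots> \<le> q (p y (s (-1) w)) + q (p y' w)" using y w by (intro seminorm_triangle) auto
    finally show ?thesis by simp
  qed
  define L where "L = {b - q (p y (s (-1) w)) | y b. (y, b) \<in> M}"
  have z0: "(z, 0) \<in> M" by (rule hb_graph_zero[OF H zV])
  have "L \<noteq> {}" using z0 unfolding L_def by blast
  moreover have "bdd_above L"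
    unfolding L_def by (rule bdd_aboveI[where M="q (p z w)"]) (auto dest!: sep[OF _ z0])
  ultimately show ?thesis
    by (intro that[of "Sup L"] cSup_upper cSup_least) (auto simp: L_def intro: sep)
qed

definition graph_extend :: "('v \<times> real) set \<Rightarrow> 'v \<Rightarrow> real \<Rightarrow> ('v \<times> real) set" where
  "graph_extend M w c = {(p x (s (of_real t) w), a + t * c) | x a t. (x, a) \<in> M}"

lemma graph_extend_functional:
  assumes H: "hb_graph V g M" and w: "w \<in> C" and new: "\<And>a. (w, a) \<notin> M"
    and yb: "(y, b) \<in> graph_extend M w c" "(y, b') \<in> graph_extend M w c"
  shows "b = b'"
proof -
  obtain x a t where xat: "(x, a) \<in> M" "y = p x (s (of_real t) w)" "b = a + t * c"
    using yb(1) unfolding graph_extend_def by blast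
  obtain x' a' t' where xat': "(x', a') \<in> M" "y = p x' (s (of_real t') w)" "b' = a' + t' * c"
    using yb(2) unfolding graph_extend_def by blast
  have x: "x \<in> C" "x' \<in> C" using hb_graphD(2)[OF H] xat(1) xat'(1) by auto
  let ?u = "p x (s (-1) x')"
  have u: "?u \<in> C" using x by simp
  have d: "p ?u (s (of_real (t - t')) w) = z"
    using xat(2) xat'(2) by (intro diff_scale_collect[OF x w]) simp
  have uM: "(?u, a + (-1) * a') \<in> M"
    using hb_graphD(5)[OF H xat(1) hb_graphD(6)[OF H xat'(1), of "-1"]] by simp
  have tt: "t = t'"
  proof (rule ccontr)
    assume ne: "t \<noteq> t'"
    have "s (of_real (t - t')) w = s (-1) ?u" by (rule add_eq_zero_imp_neg[OF u _ d]) (simp add: w)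
    hence "s (of_real (1 / (t - t'))) (s (of_real (t - t')) w) = s (of_real (1 / (t - t'))) (s (-1) ?u)"
      by simp
    hence "w = s (of_real (- 1 / (t - t'))) ?u" using ne w u by (simp add: field_simps)
    thus False using hb_graphD(6)[OF H uM] new by metis
  qed
  hence "?u = z" using d w u by simp
  hence "x = x'" using diff_eq_zero_imp_eq x by blast
  hence "a = a'" using hb_graphD(1)[OF H] xat(1) xat'(1) by blast
  thus "b = b'" using xat(3) xat'(3) tt by simp
qed

lemma graph_extend_dominated:
  assumes H: "hb_graph V g M" and w: "w \<in> C"
    and lower: "\<And>y b. (y, b) \<in> M \<Longrightarrow> b - q (p y (s (-1) w)) \<le> c"
    and upper: "\<And>y b. (y, b) \<in> M \<Longrightarrow> c \<le> q (p y w) - b"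
    and yb: "(y, b) \<in> graph_extend M w c"
  shows "b \<le> q y"
proof -
  obtain x a t where xat: "(x, a) \<in> M" "y = p x (s (of_real t) w)" "b = a + t * c"
    using yb unfolding graph_extend_def by blast
  have x: "x \<in> C" using hb_graphD(2)[OF H] xat(1) by auto
  consider "t = 0" | "t > 0" | "t < 0" by linarith
  then show ?thesis
  proof cases
    case 1
    thus ?thesis using xat hb_graphD(3)[OF H xat(1)] x w by simp
  next
    case 2
    let ?x = "s (of_real (1 / t)) x"
    have "c \<le> q (p ?x w) - (1 / t) * a" by (rule upper[OF hb_graphD(6)[OF H xat(1)]])
    hence "t * c \<le> t * q (p ?x w) - a" using 2 by (simp add: field_simps)
    also have "t * q (p ?x w) = q (s (of_real t) (p ?x w))" using seminorm_scale x w 2 by simp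
    also have "s (of_real t) (p ?x w) = y" using x w 2 xat(2) by (simp add: scale_add_right)
    finally show ?thesis using xat(3) by simp
  next
    case 3
    let ?x = "s (of_real (- 1 / t)) x"
    have "(- 1 / t) * a - q (p ?x (s (-1) w)) \<le> c" by (rule lower[OF hb_graphD(6)[OF H xat(1)]])
    hence "a + t * c \<le> (- t) * q (p ?x (s (-1) w))" using 3 by (simp add: field_simps)
    also have "(- t) * q (p ?x (s (-1) w)) = q (s (of_real (- t)) (p ?x (s (-1) w)))"
      using seminorm_scale x w 3 by simp
    also have "s (of_real (- t)) (p ?x (s (-1) w)) = y" using x w 3 xat(2) by (simp add: scale_add_right)
    finally show ?thesis using xat(3) by simp
  qed
qed

lemma hb_graph_graph_extend:
  assumes H: "hb_graph V g M" and w: "w \<in> C" and new: "\<And>a. (w, a) \<notin> M"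
    and lower: "\<And>y b. (y, b) \<in> M \<Longrightarrow> b - q (p y (s (-1) w)) \<le> c"
    and upper: "\<And>y b. (y, b) \<in> M \<Longrightarrow> c \<le> q (p y w) - b"
  shows "hb_graph V g (graph_extend M w c)"
  unfolding hb_graph_def
proof (intro conjI allI impI ballI)
  fix y b b' assume "(y, b) \<in> graph_extend M w c" "(y, b') \<in> graph_extend M w c"
  thus "b = b'" by (rule graph_extend_functional[OF H w new])
next
  fix y b assume yb: "(y, b) \<in> graph_extend M w c"
  thus "y \<in> C" using hb_graphD(2)[OF H] w unfolding graph_extend_def by auto
  show "b \<le> q y" by (rule graph_extend_dominated[OF H w lower upper yb])
next
  fix v assume "v \<in> V"
  thus "(v, g v) \<in> graph_extend M w c"
    using hb_graphD(2,4)[OF H] w unfolding graph_extend_def by force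
next
  fix y b y' b' assume "(y, b) \<in> graph_extend M w c" "(y', b') \<in> graph_extend M w c"
  then obtain x a t x' a' t' where xat: "(x, a) \<in> M" "y = p x (s (of_real t) w)" "b = a + t * c"
    and xat': "(x', a') \<in> M" "y' = p x' (s (of_real t') w)" "b' = a' + t' * c"
    unfolding graph_extend_def by blast
  have "x \<in> C" "x' \<in> C" using hb_graphD(2)[OF H] xat(1) xat'(1) by auto
  hence "(p y y', b + b') = (p (p x x') (s (of_real (t + t')) w), (a + a') + (t + t') * c)"
    using add_scale_collect[OF _ _ w] xat xat' by (simp add: algebra_simps)
  thus "(p y y', b + b') \<in> graph_extend M w c"
    using hb_graphD(5)[OF H xat(1) xat'(1)] unfolding graph_extend_def by blast
next
  fix y b r assume "(y, b) \<in> graph_extend M w c"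
  then obtain x a t where xat: "(x, a) \<in> M" "y = p x (s (of_real t) w)" "b = a + t * c"
    unfolding graph_extend_def by blast
  have "x \<in> C" using hb_graphD(2)[OF H] xat(1) by auto
  hence "(s (of_real r) y, r * b) = (p (s (of_real r) x) (s (of_real (r * t)) w), r * a + (r * t) * c)"
    using xat w by (simp add: scale_add_right algebra_simps)
  thus "(s (of_real r) y, r * b) \<in> graph_extend M w c"
    using hb_graphD(6)[OF H xat(1), of r] unfolding graph_extend_def by blast
qed

lemma hb_graph_extend:
  assumes H: "hb_graph V g M" and zV: "z \<in> V" and w: "w \<in> C" and new: "\<And>a. (w, a) \<notin> M"
  obtains M' where "hb_graph V g M'" "M \<subset> M'"
proof -
  obtain c where lower: "\<And>y b. (y, b) \<in> M \<Longrightarrow> b - q (p y (s (-1) w)) \<le> c"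
    and upper: "\<And>y b. (y, b) \<in> M \<Longrightarrow> c \<le> q (p y w) - b"
    using hb_separating_constant[OF H zV w] by blast
  have "M \<subseteq> graph_extend M w c"
    using hb_graphD(2)[OF H] w unfolding graph_extend_def by (force intro: exI[of _ 0])
  moreover have "(w, c) \<in> graph_extend M w c"
    using hb_graph_zero[OF H zV] w unfolding graph_extend_def by (force intro: exI[of _ 1])
  ultimately have "M \<subset> graph_extend M w c" using new by blast
  thus ?thesis using that hb_graph_graph_extend[OF H w new lower upper] by blast
qed

lemma hb_graph_chain_Union:
  assumes Ch: "Ch \<in> chains {H. hb_graph V g H}" and ne: "Ch \<noteq> {}"
  shows "hb_graph V g (\<Union>Ch)"
proof -
  have H: "hb_graph V g H" if "H \<in> Ch" for H using chainsD2[OF Ch] that by blast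
  have cmp: "H \<subseteq> H' \<or> H' \<subseteq> H" if "H \<in> Ch" "H' \<in> Ch" for H H' using chainsD[OF Ch that] .
  show ?thesis
    unfolding hb_graph_def
  proof (intro conjI allI impI ballI)
    fix x a b assume "(x, a) \<in> \<Union>Ch" "(x, b) \<in> \<Union>Ch"
    then obtain H H' where "H \<in> Ch" "H' \<in> Ch" "(x, a) \<in> H" "(x, b) \<in> H'" by blast
    thus "a = b" using cmp H hb_graphD(1) by (metis subsetD)
  next
    fix x a assume "(x, a) \<in> \<Union>Ch"
    then obtain H where "H \<in> Ch" "(x, a) \<in> H" by blast
    thus "x \<in> C" "a \<le> q x" using H hb_graphD(2,3) by blast+
  next
    fix v assume "v \<in> V" thus "(v, g v) \<in> \<Union>Ch" using ne H hb_graphD(4) by blast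
  next
    fix x a y b assume "(x, a) \<in> \<Union>Ch" "(y, b) \<in> \<Union>Ch"
    then obtain H H' where HH: "H \<in> Ch" "H' \<in> Ch" "(x, a) \<in> H" "(y, b) \<in> H'" by blast
    thus "(p x y, a + b) \<in> \<Union>Ch"
      using cmp[OF HH(1,2)] H hb_graphD(5) by (metis UnionI subsetD)
  next
    fix x a t assume "(x, a) \<in> \<Union>Ch"
    then obtain H where "H \<in> Ch" "(x, a) \<in> H" by blast
    thus "(s (of_real t) x, t * a) \<in> \<Union>Ch" using H hb_graphD(6) by blast
  qed
qed

theorem real_hahn_banach:
  assumes VC: "V \<subseteq> C" and zV: "z \<in> V"
    and Vp: "\<And>v w. v \<in> V \<Longrightarrow> w \<in> V \<Longrightarrow> p v w \<in> V"
    and Vs: "\<And>c v. v \<in> V \<Longrightarrow> s c v \<in> V"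
    and gadd: "\<And>v w. v \<in> V \<Longrightarrow> w \<in> V \<Longrightarrow> g (p v w) = g v + g w"
    and gsc: "\<And>t v. v \<in> V \<Longrightarrow> g (s (of_real t) v) = t * g v"
    and gq: "\<And>v. v \<in> V \<Longrightarrow> g v \<le> q v"
  obtains G where "\<And>v. v \<in> V \<Longrightarrow> G v = g v"
    and "\<And>v w. v \<in> C \<Longrightarrow> w \<in> C \<Longrightarrow> G (p v w) = G v + G w"
    and "\<And>t v. v \<in> C \<Longrightarrow> G (s (of_real t) v) = t * G v"
    and "\<And>v. v \<in> C \<Longrightarrow> G v \<le> q v"
proof -
  have graph_g: "hb_graph V g {(v, g v) | v. v \<in> V}"
    unfolding hb_graph_def using VC gq
    by (auto simp: gadd gsc Vp Vs simp del: of_real_minus)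
  have "\<exists>M\<in>{H. hb_graph V g H}. \<forall>X\<in>{H. hb_graph V g H}. M \<subseteq> X \<longrightarrow> X = M"
  proof (rule Zorn_Lemma2, rule ballI)
    fix Ch assume Ch: "Ch \<in> chains {H. hb_graph V g H}"
    show "\<exists>U\<in>{H. hb_graph V g H}. \<forall>X\<in>Ch. X \<subseteq> U"
    proof (cases "Ch = {}")
      case True thus ?thesis using graph_g by blast
    next
      case False thus ?thesis using hb_graph_chain_Union[OF Ch] by blast
    qed
  qed
  then obtain M where M: "hb_graph V g M" and max: "\<And>X. hb_graph V g X \<Longrightarrow> M \<subseteq> X \<Longrightarrow> X = M"
    by blast
  have total: "\<exists>a. (x, a) \<in> M" if "x \<in> C" for x
    using hb_graph_extend[OF M zV that] max by blast
  define G where "G x = (THE a. (x, a) \<in> M)" for x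
  have GM: "(x, G x) \<in> M" if "x \<in> C" for x
    unfolding G_def using total[OF that] hb_graphD(1)[OF M] by (metis theI)
  have G_eq: "G x = a" if "(x, a) \<in> M" for x a
    using hb_graphD(1)[OF M GM[OF hb_graphD(2)[OF M that]] that] .
  show ?thesis
  proof
    show "G v = g v" if "v \<in> V" for v using G_eq hb_graphD(4)[OF M] that by blast
    show "G (p v w) = G v + G w" if "v \<in> C" "w \<in> C" for v w
      using G_eq hb_graphD(5)[OF M GM GM] that by blast
    show "G (s (of_real t) v) = t * G v" if "v \<in> C" for t v
      using G_eq hb_graphD(6)[OF M GM] that by blast
    show "G v \<le> q v" if "v \<in> C" for v using hb_graphD(3)[OF M GM] that by blast
  qed
qed

end

lemma cnj_sgn_mult_self: "cnj (sgn x) * x = complex_of_real (cmod x)"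
proof (cases "x = 0")
  case False
  have "cnj (sgn x) * x = cnj x * x / complex_of_real (cmod x)"
    by (simp add: sgn_div_norm divide_inverse scaleR_conv_of_real)
  thus ?thesis using False by (simp add: cnj_mult_self power2_eq_square)
qed simp

context carrier_vs
begin

lemma complexification:
  assumes add: "\<And>v w. v \<in> C \<Longrightarrow> w \<in> C \<Longrightarrow> G (p v w) = G v + G w"
    and scale: "\<And>t v. v \<in> C \<Longrightarrow> G (s (of_real t) v) = t * G v"
    and F_def: "\<And>v. F v = complex_of_real (G v) - \<i> * complex_of_real (G (s \<i> v))"
  shows "\<And>v w. v \<in> C \<Longrightarrow> w \<in> C \<Longrightarrow> F (p v w) = F v + F w"
    and "\<And>c v. v \<in> C \<Longrightarrow> F (s c v) = c * F v"
proof -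
  have scale_complex: "G (s c w) = Re c * G w + Im c * G (s \<i> w)" if w: "w \<in> C" for c w
  proof -
    have "c = of_real (Re c) + of_real (Im c) * \<i>" by (simp add: complex_eq_iff)
    hence "s c w = p (s (of_real (Re c)) w) (s (of_real (Im c)) (s \<i> w))"
      using w by (simp add: add_scale_same)
    hence "G (s c w) = G (s (of_real (Re c)) w) + G (s (of_real (Im c)) (s \<i> w))"
      using add[OF scale_closed[OF w] scale_closed[OF scale_closed[OF w]]] by (simp only:)
    also have "\<dots> = Re c * G w + Im c * G (s \<i> w)"
      using scale[OF w] scale[OF scale_closed[OF w]] by (simp only:)
    finally show ?thesis .
  qed
  show "F (p v w) = F v + F w" if "v \<in> C" "w \<in> C" for v w
    using that by (simp add: F_def scale_add_right add algebra_simps)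
  show "F (s c v) = c * F v" if v: "v \<in> C" for c v
  proof -
    have "G (s \<i> (s c v)) = - Im c * G v + Re c * G (s \<i> v)"
      using scale_complex[OF v, of "\<i> * c"] v by simp
    thus ?thesis
      unfolding F_def using scale_complex[OF v, of c] by (simp add: complex_eq_iff algebra_simps)
  qed
qed

end

context seminormed_carrier_vs
begin

lemma cmod_le_seminorm:
  assumes scale: "\<And>c. F (s c v) = c * F v" and Re_le: "\<And>c. Re (F (s c v)) \<le> q (s c v)"
    and v: "v \<in> C"
  shows "cmod (F v) \<le> q v"
proof (cases "F v = 0")
  case True thus ?thesis using seminorm_nonneg[OF v] by simp
next
  case False
  let ?d = "cnj (sgn (F v))"
  have "cmod (F v) = Re (F (s ?d v))" using scale[of ?d] cnj_sgn_mult_self[of "F v"] by simp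
  also have "\<dots> \<le> q (s ?d v)" by (rule Re_le)
  also have "\<dots> = q v" using seminorm_scale[OF v] False by (simp add: norm_sgn)
  finally show ?thesis .
qed

theorem complex_hahn_banach:
  assumes VC: "V \<subseteq> C" and zV: "z \<in> V"
    and Vp: "\<And>v w. v \<in> V \<Longrightarrow> w \<in> V \<Longrightarrow> p v w \<in> V"
    and Vs: "\<And>c v. v \<in> V \<Longrightarrow> s c v \<in> V"
    and fadd: "\<And>v w. v \<in> V \<Longrightarrow> w \<in> V \<Longrightarrow> f (p v w) = f v + f w"
    and fsc: "\<And>c v. v \<in> V \<Longrightarrow> f (s c v) = c * f v"
    and fq: "\<And>v. v \<in> V \<Longrightarrow> cmod (f v) \<le> q v"
  obtains F where "\<And>v. v \<in> V \<Longrightarrow> F v = f v"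
    and "\<And>v w. v \<in> C \<Longrightarrow> w \<in> C \<Longrightarrow> F (p v w) = F v + F w"
    and "\<And>c v. v \<in> C \<Longrightarrow> F (s c v) = c * F v"
    and "\<And>v. v \<in> C \<Longrightarrow> cmod (F v) \<le> q v"
proof -
  obtain G where G_ext: "\<And>v. v \<in> V \<Longrightarrow> G v = Re (f v)"
    and G_add: "\<And>v w. v \<in> C \<Longrightarrow> w \<in> C \<Longrightarrow> G (p v w) = G v + G w"
    and G_scale: "\<And>t v. v \<in> C \<Longrightarrow> G (s (of_real t) v) = t * G v"
    and G_le: "\<And>v. v \<in> C \<Longrightarrow> G v \<le> q v"
    by (rule real_hahn_banach[OF VC zV Vp Vs, of "\<lambda>v. Re (f v)"])
      (use fadd fsc fq in \<open>auto intro: order_trans[OF complex_Re_le_cmod]\<close>)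
  define F where "F v = complex_of_real (G v) - \<i> * complex_of_real (G (s \<i> v))" for v
  have F_add: "F (p v w) = F v + F w" if "v \<in> C" "w \<in> C" for v w
    using complexification(1)[of G F, OF G_add G_scale F_def] that by metis
  have F_scale: "F (s c v) = c * F v" if "v \<in> C" for c v
    using complexification(2)[of G F, OF G_add G_scale F_def] that by metis
  show ?thesis
  proof
    show "F v = f v" if v: "v \<in> V" for v
      using G_ext[OF v] G_ext[OF Vs[OF v]] fsc[OF v] by (simp add: F_def complex_eq_iff)
    show "cmod (F v) \<le> q v" if v: "v \<in> C" for v
    proof (rule cmod_le_seminorm[OF _ _ v])
      show "F (s c v) = c * F v" for c by (rule F_scale[OF v])
      show "Re (F (s c v)) \<le> q (s c v)" for c using G_le v by (simp add: F_def)
    qed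
  qed (use F_add F_scale in auto)
qed

end

section \<open>\<open>\<K>\<close>-operator spaces\<close>

locale K_opspace =
  fixes W :: "'w kspace"
  assumes K_operator_space: "K_operator_space W"

sublocale K_opspace \<subseteq> W: carrier_vs "kcarrier W" "kplus W" "kscale W" "kzero W"
  using K_operator_space unfolding K_operator_space_def K_bimodule_def
  by (intro complex_vs_imp_carrier_vs) blast

context K_opspace
begin

abbreviation WC :: "'w set" where "WC \<equiv> kcarrier W"
abbreviation wadd :: "'w \<Rightarrow> 'w \<Rightarrow> 'w" where "wadd \<equiv> kplus W"
abbreviation wscale :: "complex \<Rightarrow> 'w \<Rightarrow> 'w" where "wscale \<equiv> kscale W"
abbreviation wzero :: 'w where "wzero \<equiv> kzero W"
abbreviation wnorm :: "'w \<Rightarrow> real" where "wnorm \<equiv> knorm W"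
abbreviation lmul :: "op \<Rightarrow> 'w \<Rightarrow> 'w" where "lmul \<equiv> lact W"
abbreviation rmul :: "'w \<Rightarrow> op \<Rightarrow> 'w" where "rmul \<equiv> ract W"

lemma
  shows lmul_closed[simp]: "\<And>a v. a \<in> Kc \<Longrightarrow> v \<in> WC \<Longrightarrow> lmul a v \<in> WC"
    and rmul_closed[simp]: "\<And>a v. a \<in> Kc \<Longrightarrow> v \<in> WC \<Longrightarrow> rmul v a \<in> WC"
    and lmul_comp: "\<And>a b v. a \<in> Kc \<Longrightarrow> b \<in> Kc \<Longrightarrow> v \<in> WC \<Longrightarrow> lmul (a \<circ> b) v = lmul a (lmul b v)"
    and rmul_comp: "\<And>a b v. a \<in> Kc \<Longrightarrow> b \<in> Kc \<Longrightarrow> v \<in> WC \<Longrightarrow> rmul v (a \<circ> b) = rmul (rmul v a) b"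
    and lmul_opadd: "\<And>a b v. a \<in> Kc \<Longrightarrow> b \<in> Kc \<Longrightarrow> v \<in> WC \<Longrightarrow>
      lmul (opadd a b) v = wadd (lmul a v) (lmul b v)"
    and rmul_opadd: "\<And>a b v. a \<in> Kc \<Longrightarrow> b \<in> Kc \<Longrightarrow> v \<in> WC \<Longrightarrow>
      rmul v (opadd a b) = wadd (rmul v a) (rmul v b)"
    and lmul_add: "\<And>a v w. a \<in> Kc \<Longrightarrow> v \<in> WC \<Longrightarrow> w \<in> WC \<Longrightarrow>
      lmul a (wadd v w) = wadd (lmul a v) (lmul a w)"
    and rmul_add: "\<And>a v w. a \<in> Kc \<Longrightarrow> v \<in> WC \<Longrightarrow> w \<in> WC \<Longrightarrow>
      rmul (wadd v w) a = wadd (rmul v a) (rmul w a)"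
    and lmul_opscale: "\<And>a v c. a \<in> Kc \<Longrightarrow> v \<in> WC \<Longrightarrow> lmul (opscale c a) v = wscale c (lmul a v)"
    and lmul_scale: "\<And>a v c. a \<in> Kc \<Longrightarrow> v \<in> WC \<Longrightarrow> lmul a (wscale c v) = wscale c (lmul a v)"
    and rmul_opscale: "\<And>a v c. a \<in> Kc \<Longrightarrow> v \<in> WC \<Longrightarrow> rmul v (opscale c a) = wscale c (rmul v a)"
    and rmul_scale: "\<And>a v c. a \<in> Kc \<Longrightarrow> v \<in> WC \<Longrightarrow> rmul (wscale c v) a = wscale c (rmul v a)"
    and lmul_rmul_commute: "\<And>a b v. a \<in> Kc \<Longrightarrow> b \<in> Kc \<Longrightarrow> v \<in> WC \<Longrightarrow>
      lmul a (rmul v b) = rmul (lmul a v) b"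
  using K_operator_space unfolding K_operator_space_def K_bimodule_def Let_def
  by (elim conjE; metis)+

lemma
  shows wnorm_nonneg: "\<And>v. v \<in> WC \<Longrightarrow> wnorm v \<ge> 0"
    and wnorm_eq_zero_iff: "\<And>v. v \<in> WC \<Longrightarrow> wnorm v = 0 \<longleftrightarrow> v = wzero"
    and wnorm_scale: "\<And>v c. v \<in> WC \<Longrightarrow> wnorm (wscale c v) = cmod c * wnorm v"
    and wnorm_triangle: "\<And>v w. v \<in> WC \<Longrightarrow> w \<in> WC \<Longrightarrow> wnorm (wadd v w) \<le> wnorm v + wnorm w"
  using K_operator_space unfolding K_operator_space_def is_norm_def by blast+

lemma wnorm_zero[simp]: "wnorm wzero = 0"
  using wnorm_eq_zero_iff[OF W.zero_closed] by simp

lemma essentialE: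
  assumes "v \<in> WC"
  obtains a w where "a \<in> Kc" "w \<in> WC" "v = lmul a w"
  using K_operator_space assms unfolding K_operator_space_def essential_def by blast

lemma lmul_zero_op: "v \<in> WC \<Longrightarrow> lmul zero_op v = wzero"
  using lmul_opscale[OF zero_op_Kc, of v 0] by (simp add: opscale_zero zero_op_Kc)

lemma rmul_zero_op: "v \<in> WC \<Longrightarrow> rmul v zero_op = wzero"
  using rmul_opscale[OF zero_op_Kc, of v 0] by (simp add: opscale_zero zero_op_Kc)

lemma lmul_zero: "a \<in> Kc \<Longrightarrow> lmul a wzero = wzero"
  using lmul_scale[OF _ W.zero_closed, of a 0] by simp

lemma rmul_zero: "a \<in> Kc \<Longrightarrow> rmul wzero a = wzero"
  using rmul_scale[OF _ W.zero_closed, of a 0] by simp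

text \<open>\<open>sandwich y w x\<close> is \<open>y\<^sup>* w x\<close>, with \<open>y\<^sup>*\<close> and \<open>x\<close> acting as rank-one compact operators; a functional
  applied to it plays the role of the matrix entry \<open>\<langle>\<psi>(w) x, y\<rangle>\<close> of the operator \<open>\<psi>(w)\<close> to be built.\<close>

definition sandwich :: "vec \<Rightarrow> 'w \<Rightarrow> vec \<Rightarrow> 'w" where
  "sandwich y w x = rmul (lmul (row_op y) w) (col_op x)"

lemma sandwich_closed[simp]: "y \<in> l2 \<Longrightarrow> x \<in> l2 \<Longrightarrow> w \<in> WC \<Longrightarrow> sandwich y w x \<in> WC"
  by (simp add: sandwich_def row_op_Kc col_op_Kc)

lemma wnorm_sandwich_le_one:
  assumes y: "y \<in> l2" "l2_norm y \<le> 1" and x: "x \<in> l2" "l2_norm x \<le> 1"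
    and w: "w \<in> WC" "wnorm w \<le> 1"
  shows "wnorm (sandwich y w x) \<le> 1"
proof -
  have "wnorm (wadd (rmul (lmul (row_op y) w) (col_op x)) (rmul (lmul zero_op w) zero_op)) \<le> 1"
    using K_operator_space w row_op_Kc[OF y(1)] col_op_Kc[OF x(1)] zero_op_Kc
      op_norm_row_op_square_le[OF y] op_norm_col_op_square_le[OF x]
    unfolding K_operator_space_def abs_K_convex_def by blast
  thus ?thesis using w y x by (simp add: sandwich_def lmul_zero_op rmul_zero rmul_zero_op row_op_Kc col_op_Kc)
qed

lemma sandwich_scale:
  "y \<in> l2 \<Longrightarrow> x \<in> l2 \<Longrightarrow> w \<in> WC \<Longrightarrow>
   sandwich (vscale (of_real r) y) (wscale (of_real t) w) (vscale (of_real u) x)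
     = wscale (of_real (r * t * u)) (sandwich y w x)"
  by (simp add: sandwich_def row_op_vscale col_op_vscale lmul_opscale rmul_opscale lmul_scale rmul_scale
      row_op_Kc col_op_Kc mult_ac)

lemma wnorm_sandwich_le:
  assumes y: "y \<in> l2" and x: "x \<in> l2" and w: "w \<in> WC"
  shows "wnorm (sandwich y w x) \<le> l2_norm y * wnorm w * l2_norm x"
proof (cases "l2_norm y = 0 \<or> l2_norm x = 0 \<or> wnorm w = 0")
  case True
  hence "y = vzero \<or> x = vzero \<or> w = wzero"
    using l2_norm_zero_iff[OF y] l2_norm_zero_iff[OF x] wnorm_eq_zero_iff[OF w] by blast
  hence "sandwich y w x = wzero"
    using w x y by (auto simp: sandwich_def row_op_vzero col_op_vzero lmul_zero_op rmul_zero_op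
        lmul_zero rmul_zero row_op_Kc col_op_Kc)
  thus ?thesis using y x w wnorm_nonneg[OF w] by simp
next
  case False
  hence pos: "l2_norm y > 0" "l2_norm x > 0" "wnorm w > 0"
    using l2_norm_nonneg[OF y] l2_norm_nonneg[OF x] wnorm_nonneg[OF w] by auto
  define y' where "y' = vscale (of_real (1 / l2_norm y)) y"
  define x' where "x' = vscale (of_real (1 / l2_norm x)) x"
  define w' where "w' = wscale (of_real (1 / wnorm w)) w"
  have y': "y' \<in> l2" "l2_norm y' \<le> 1" using y pos by (auto simp: y'_def l2_norm_vscale norm_divide)
  have x': "x' \<in> l2" "l2_norm x' \<le> 1" using x pos by (auto simp: x'_def l2_norm_vscale norm_divide)
  have w': "w' \<in> WC" "wnorm w' \<le> 1" using w pos by (auto simp: w'_def wnorm_scale norm_divide)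
  have "sandwich y w x = sandwich (vscale (of_real (l2_norm y)) y') (wscale (of_real (wnorm w)) w')
      (vscale (of_real (l2_norm x)) x')"
    using pos w by (simp add: y'_def x'_def w'_def vscale_vscale)
  also have "\<dots> = wscale (of_real (l2_norm y * wnorm w * l2_norm x)) (sandwich y' w' x')"
    by (rule sandwich_scale[OF y'(1) x'(1) w'(1)])
  finally have "wnorm (sandwich y w x) = l2_norm y * wnorm w * l2_norm x * wnorm (sandwich y' w' x')"
    using pos w' y' x' by (simp add: wnorm_scale abs_mult norm_mult)
  also have "\<dots> \<le> l2_norm y * wnorm w * l2_norm x * 1"
    using wnorm_sandwich_le_one[OF y' x' w'] pos by (intro mult_left_mono) auto
  finally show ?thesis by simp
qed

lemma sandwich_vadd_left: "y \<in> l2 \<Longrightarrow> y' \<in> l2 \<Longrightarrow> x \<in> l2 \<Longrightarrow> w \<in> WC \<Longrightarrow>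
   sandwich (vadd y y') w x = wadd (sandwich y w x) (sandwich y' w x)"
  by (simp add: sandwich_def row_op_vadd lmul_opadd rmul_add row_op_Kc col_op_Kc)

lemma sandwich_vscale_left: "y \<in> l2 \<Longrightarrow> x \<in> l2 \<Longrightarrow> w \<in> WC \<Longrightarrow>
   sandwich (vscale c y) w x = wscale (cnj c) (sandwich y w x)"
  by (simp add: sandwich_def row_op_vscale lmul_opscale rmul_scale row_op_Kc col_op_Kc)

lemma sandwich_vadd_right: "y \<in> l2 \<Longrightarrow> x \<in> l2 \<Longrightarrow> x' \<in> l2 \<Longrightarrow> w \<in> WC \<Longrightarrow>
   sandwich y w (vadd x x') = wadd (sandwich y w x) (sandwich y w x')"
  by (simp add: sandwich_def col_op_vadd rmul_opadd row_op_Kc col_op_Kc)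

lemma sandwich_vscale_right: "y \<in> l2 \<Longrightarrow> x \<in> l2 \<Longrightarrow> w \<in> WC \<Longrightarrow>
   sandwich y w (vscale c x) = wscale c (sandwich y w x)"
  by (simp add: sandwich_def col_op_vscale rmul_opscale row_op_Kc col_op_Kc)

lemma sandwich_add: "y \<in> l2 \<Longrightarrow> x \<in> l2 \<Longrightarrow> w \<in> WC \<Longrightarrow> w' \<in> WC \<Longrightarrow>
   sandwich y (wadd w w') x = wadd (sandwich y w x) (sandwich y w' x)"
  by (simp add: sandwich_def lmul_add rmul_add row_op_Kc col_op_Kc)

lemma sandwich_scale_middle: "y \<in> l2 \<Longrightarrow> x \<in> l2 \<Longrightarrow> w \<in> WC \<Longrightarrow>
   sandwich y (wscale c w) x = wscale c (sandwich y w x)"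
  by (simp add: sandwich_def lmul_scale rmul_scale row_op_Kc col_op_Kc)

end

section \<open>Bi-\<open>\<K>\<close>-linear maps induced by bounded functionals\<close>

locale K_functional = K_opspace W for W :: "'w kspace" +
  fixes F :: "'w \<Rightarrow> complex" and M :: real
  assumes F_add: "\<And>v w. v \<in> WC \<Longrightarrow> w \<in> WC \<Longrightarrow> F (wadd v w) = F v + F w"
    and F_scale: "\<And>c v. v \<in> WC \<Longrightarrow> F (wscale c v) = c * F v"
    and F_bound: "\<And>v. v \<in> WC \<Longrightarrow> cmod (F v) \<le> M * wnorm v"
    and M_nonneg: "M \<ge> 0"
begin

definition entry_vec :: "'w \<Rightarrow> vec \<Rightarrow> vec" where
  "entry_vec w x = (\<lambda>i. F (sandwich (unit_vec i) w x))"

definition induced_op :: "'w \<Rightarrow> op" where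
  "induced_op w = (\<lambda>x. if x \<in> l2 then entry_vec w x else vzero)"

lemma F_sandwich_bound: "y \<in> l2 \<Longrightarrow> x \<in> l2 \<Longrightarrow> w \<in> WC \<Longrightarrow>
    cmod (F (sandwich y w x)) \<le> M * wnorm w * l2_norm x * l2_norm y"
  using F_bound[OF sandwich_closed] mult_left_mono[OF wnorm_sandwich_le M_nonneg]
  by (fastforce simp: mult_ac)

lemma entry_vec_l2_inner:
  assumes w: "w \<in> WC" and x: "x \<in> l2"
  shows "entry_vec w x \<in> l2" "\<And>y. y \<in> l2 \<Longrightarrow> l2_inner (entry_vec w x) y = F (sandwich y w x)"
proof -
  interpret conj_entry: bounded_l2_functional "\<lambda>y. cnj (F (sandwich y w x))" "M * wnorm w * l2_norm x"
    using w x
    by unfold_locales (simp_all add: sandwich_vadd_left sandwich_vscale_left F_add F_scale F_sandwich_bound)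
  have eq: "conj_entry.representer = entry_vec w x"
    by (simp add: conj_entry.representer_def entry_vec_def)
  show P: "entry_vec w x \<in> l2" using conj_entry.representer_l2 eq by simp
  fix y assume y: "y \<in> l2"
  show "l2_inner (entry_vec w x) y = F (sandwich y w x)"
    using conj_entry.representation[OF y] l2_inner_cnj[OF P y] eq by (metis complex_cnj_cnj)
qed

lemma entry_vec_norm:
  assumes w: "w \<in> WC" and x: "x \<in> l2"
  shows "l2_norm (entry_vec w x) \<le> M * wnorm w * l2_norm x"
proof -
  let ?P = "entry_vec w x"
  have P: "?P \<in> l2" by (rule entry_vec_l2_inner(1)[OF w x])
  have "complex_of_real ((l2_norm ?P)\<^sup>2) = F (sandwich ?P w x)"
    using entry_vec_l2_inner(2)[OF w x P] l2_inner_self[OF P] by simp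
  hence "(l2_norm ?P)\<^sup>2 = cmod (F (sandwich ?P w x))" by (metis norm_of_real abs_power2)
  also have "\<dots> \<le> M * wnorm w * l2_norm x * l2_norm ?P" by (rule F_sandwich_bound[OF P x w])
  finally have "l2_norm ?P * l2_norm ?P \<le> (M * wnorm w * l2_norm x) * l2_norm ?P"
    by (simp add: power2_eq_square)
  thus ?thesis
    using l2_norm_nonneg[OF P] M_nonneg wnorm_nonneg[OF w] l2_norm_nonneg[OF x]
    by (metis mult_right_le_imp_le mult_nonneg_nonneg order_le_less)
qed

lemma induced_op_bounded:
  assumes w: "w \<in> WC" shows "bounded_op (induced_op w)"
proof (rule bounded_opI[where C="M * wnorm w"])
  fix x assume x: "x \<in> l2"
  show "induced_op w x \<in> l2" using entry_vec_l2_inner(1)[OF w x] x by (simp add: induced_op_def)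
  show "l2_norm (induced_op w x) \<le> M * wnorm w * l2_norm x"
    using entry_vec_norm[OF w x] x by (simp add: induced_op_def)
next
  fix x y assume "x \<in> l2" "y \<in> l2"
  thus "induced_op w (vadd x y) = vadd (induced_op w x) (induced_op w y)"
    using w by (simp add: induced_op_def entry_vec_def sandwich_vadd_right F_add) (simp add: vadd_def)
next
  fix c x assume "x \<in> l2"
  thus "induced_op w (vscale c x) = vscale c (induced_op w x)"
    using w by (simp add: induced_op_def entry_vec_def sandwich_vscale_right F_scale) (simp add: vscale_def)
qed (simp add: induced_op_def)

lemma op_norm_induced_op_le: "w \<in> WC \<Longrightarrow> op_norm (induced_op w) \<le> M * wnorm w"
  using entry_vec_norm M_nonneg wnorm_nonneg by (intro op_norm_le) (simp_all add: induced_op_def)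

lemma induced_op_add: "w \<in> WC \<Longrightarrow> w' \<in> WC \<Longrightarrow> induced_op (wadd w w') = opadd (induced_op w) (induced_op w')"
  by (auto simp: fun_eq_iff induced_op_def entry_vec_def opadd_def vadd_def sandwich_add F_add vzero_def)

lemma induced_op_scale: "w \<in> WC \<Longrightarrow> induced_op (wscale c w) = opscale c (induced_op w)"
  by (auto simp: fun_eq_iff induced_op_def entry_vec_def opscale_def vscale_def sandwich_scale_middle
      F_scale vzero_def)

text \<open>Left linearity reduces, through Riesz, to \<open>e\<^sub>i\<^sup>* a = \<zeta>\<^sup>*\<close> for a vector \<open>\<zeta>\<close>.\<close>

lemma induced_op_lmul:
  assumes a: "a \<in> Kc" and w: "w \<in> WC"
  shows "induced_op (lmul a w) = a \<circ> induced_op w"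
proof
  fix x show "induced_op (lmul a w) x = (a \<circ> induced_op w) x"
  proof (cases "x \<in> l2")
    case x: True
    let ?P = "entry_vec w x"
    have P: "?P \<in> l2" by (rule entry_vec_l2_inner(1)[OF w x])
    have ab: "bounded_op a" by (rule Kc_bounded[OF a])
    have "entry_vec (lmul a w) x i = a ?P i" for i
    proof -
      obtain \<zeta> where \<zeta>: "\<zeta> \<in> l2" "row_op (unit_vec i) \<circ> a = row_op \<zeta>" using row_op_comp[OF a] .
      have "sandwich (unit_vec i) (lmul a w) x = sandwich \<zeta> w x"
        unfolding sandwich_def using lmul_comp[OF row_op_Kc[OF l2_unit_vec[of i]] a w, symmetric] \<zeta>(2)
        by simp
      hence "entry_vec (lmul a w) x i = l2_inner ?P \<zeta>"
        using entry_vec_l2_inner(2)[OF w x \<zeta>(1)] by (simp add: entry_vec_def)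
      also have "\<dots> = row_op \<zeta> ?P 0" using P by (simp add: row_op_l2 vscale_def)
      also have "\<dots> = row_op (unit_vec i) (a ?P) 0" using \<zeta>(2) by (metis comp_apply)
      also have "\<dots> = a ?P i" using bounded_opD(1)[OF ab P] by (simp add: row_op_l2 vscale_def)
      finally show ?thesis .
    qed
    thus ?thesis using x by (simp add: induced_op_def fun_eq_iff)
  next
    case False
    thus ?thesis using bounded_op_vzero[OF Kc_bounded[OF a]] by (simp add: induced_op_def)
  qed
qed

lemma induced_op_rmul:
  assumes b: "b \<in> Kc" and w: "w \<in> WC"
  shows "induced_op (rmul w b) = induced_op w \<circ> b"
proof
  fix x show "induced_op (rmul w b) x = (induced_op w \<circ> b) x"
  proof (cases "x \<in> l2")
    case x: True
    have bb: "bounded_op b" by (rule Kc_bounded[OF b])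
    have "sandwich (unit_vec i) (rmul w b) x = sandwich (unit_vec i) w (b x)" for i
      using lmul_rmul_commute[OF row_op_Kc[OF l2_unit_vec] b w]
        rmul_comp[OF b col_op_Kc[OF x], of "lmul (row_op (unit_vec i)) w"] w
      by (simp add: sandwich_def comp_col_op[OF bb x] row_op_Kc)
    thus ?thesis using x bounded_opD(1)[OF bb x] by (simp add: induced_op_def entry_vec_def)
  next
    case False
    thus ?thesis using bounded_opD(2)[OF Kc_bounded[OF b] False] bounded_op_vzero[OF induced_op_bounded[OF w]]
      by (simp add: induced_op_def)
  qed
qed

lemma induced_op_Kc: assumes w: "w \<in> WC" shows "induced_op w \<in> Kc"
proof -
  obtain a w' where a: "a \<in> Kc" "w' \<in> WC" "w = lmul a w'" using essentialE[OF w] .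
  have "compact_op (a \<circ> induced_op w')"
    using a(1) induced_op_bounded[OF a(2)] by (intro compact_comp) (simp_all add: Kc_def)
  thus ?thesis using induced_op_lmul[OF a(1,2)] a(3) by (simp add: Kc_def)
qed

lemma induced_op_biK_linear: "biK_linear_map W induced_op"
  unfolding biK_linear_map_def
  by (auto simp: induced_op_Kc induced_op_add induced_op_scale induced_op_lmul induced_op_rmul)

end

context K_opspace
begin

lemma kcontinuous_if_op_norm_le:
  assumes add: "\<And>v w. v \<in> WC \<Longrightarrow> w \<in> WC \<Longrightarrow> \<psi> (wadd v w) = opadd (\<psi> v) (\<psi> w)"
    and scale: "\<And>c v. v \<in> WC \<Longrightarrow> \<psi> (wscale c v) = opscale c (\<psi> v)"
    and bound: "\<And>v. v \<in> WC \<Longrightarrow> op_norm (\<psi> v) \<le> M * wnorm v" and M: "M \<ge> 0"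
  shows "kcontinuous W \<psi>"
  unfolding kcontinuous_def
proof (intro ballI allI impI)
  fix v :: 'w and e :: real assume v: "v \<in> WC" and e: "e > 0"
  show "\<exists>d>0. \<forall>w\<in>WC. wnorm (wadd w (wscale (- 1) v)) < d \<longrightarrow>
          op_norm (opadd (\<psi> w) (opscale (- 1) (\<psi> v))) < e"
  proof (intro exI[of _ "e / (M + 1)"] conjI ballI impI)
    show "e / (M + 1) > 0" using e M by simp
    fix w assume w: "w \<in> WC" and close: "wnorm (wadd w (wscale (- 1) v)) < e / (M + 1)"
    have "op_norm (opadd (\<psi> w) (opscale (- 1) (\<psi> v))) \<le> M * wnorm (wadd w (wscale (- 1) v))"
      using bound[of "wadd w (wscale (- 1) v)"] v w by (simp add: add scale)
    also have "\<dots> \<le> M * (e / (M + 1))" using close M by (intro mult_left_mono) auto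
    also have "\<dots> < e" using e M by (simp add: field_simps)
    finally show "op_norm (opadd (\<psi> w) (opscale (- 1) (\<psi> v))) < e" .
  qed
qed

end

context K_functional
begin

lemma induced_op_kcontinuous: "kcontinuous W induced_op"
  using induced_op_add induced_op_scale op_norm_induced_op_le M_nonneg
  by (rule kcontinuous_if_op_norm_le)

lemma induced_op_eq_on_subspace:
  assumes V: "biK_invariant_subspace V W" and \<phi>: "biK_linear_map (W\<lparr>kcarrier := V\<rparr>) \<phi>"
    and F_corner: "\<And>v. v \<in> V \<Longrightarrow> F v = \<phi> v (unit_vec 0) 0" and v: "v \<in> V"
  shows "induced_op v = \<phi> v"
proof
  have \<phi>v: "bounded_op (\<phi> v)" using \<phi> v by (simp add: biK_linear_map_def Kc_bounded)
  fix x show "induced_op v x = \<phi> v x"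
  proof (cases "x \<in> l2")
    case x: True
    have "entry_vec v x i = \<phi> v x i" for i
    proof -
      have "sandwich (unit_vec i) v x \<in> V"
        using V v x unfolding biK_invariant_subspace_def sandwich_def by (simp add: row_op_Kc col_op_Kc)
      hence "entry_vec v x i = \<phi> (sandwich (unit_vec i) v x) (unit_vec 0) 0"
        by (simp add: entry_vec_def F_corner)
      also have "\<dots> = (row_op (unit_vec i) \<circ> \<phi> v \<circ> col_op x) (unit_vec 0) 0"
        using \<phi> v row_op_Kc[OF l2_unit_vec] col_op_Kc[OF x]
        by (simp add: sandwich_def biK_linear_map_def)
      also have "\<dots> = \<phi> v x i"
        using bounded_opD(1)[OF \<phi>v x] by (simp add: col_op_l2 row_op_l2 vscale_def)
      finally show ?thesis .
    qed
    thus ?thesis using x by (simp add: induced_op_def fun_eq_iff)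
  next
    case False
    thus ?thesis using bounded_opD(2)[OF \<phi>v False] by (simp add: induced_op_def)
  qed
qed

end

section \<open>Extension of bi-\<open>\<K>\<close>-linear maps\<close>

locale K_extension = K_opspace W for W :: "'w kspace" +
  fixes V :: "'w set" and \<phi> :: "'w \<Rightarrow> op"
  assumes subspace: "biK_invariant_subspace V W"
    and \<phi>_linear: "biK_linear_map (W\<lparr>kcarrier := V\<rparr>) \<phi>"
    and \<phi>_continuous: "kcontinuous (W\<lparr>kcarrier := V\<rparr>) \<phi>"
begin

abbreviation \<phi>_norm :: real where "\<phi>_norm \<equiv> kmap_norm (W\<lparr>kcarrier := V\<rparr>) \<phi>"

abbreviation \<phi>_unit_norms :: "real set" where "\<phi>_unit_norms \<equiv> {op_norm (\<phi> v) | v. v \<in> V \<and> wnorm v \<le> 1}"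

lemma \<phi>_norm_eq: "\<phi>_norm = Sup \<phi>_unit_norms"
  by (simp add: kmap_norm_def)

lemma
  shows V_subset: "V \<subseteq> WC" and zero_in_V: "wzero \<in> V"
    and V_add: "\<And>v w. v \<in> V \<Longrightarrow> w \<in> V \<Longrightarrow> wadd v w \<in> V"
    and V_scale: "\<And>c v. v \<in> V \<Longrightarrow> wscale c v \<in> V"
  using subspace unfolding biK_invariant_subspace_def by blast+

lemma
  shows \<phi>_Kc: "\<And>v. v \<in> V \<Longrightarrow> \<phi> v \<in> Kc"
    and \<phi>_add: "\<And>v w. v \<in> V \<Longrightarrow> w \<in> V \<Longrightarrow> \<phi> (wadd v w) = opadd (\<phi> v) (\<phi> w)"
    and \<phi>_scale: "\<And>c v. v \<in> V \<Longrightarrow> \<phi> (wscale c v) = opscale c (\<phi> v)"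
  using \<phi>_linear by (simp_all add: biK_linear_map_def)

lemma \<phi>_zero: "\<phi> wzero = zero_op"
  using \<phi>_scale[OF zero_in_V, of 0] by (simp add: opscale_zero)

lemma op_norm_\<phi>_scale: "v \<in> V \<Longrightarrow> op_norm (\<phi> (wscale (of_real t) v)) = \<bar>t\<bar> * op_norm (\<phi> v)"
  using \<phi>_scale op_norm_opscale[OF Kc_bounded[OF \<phi>_Kc]] by simp

lemma \<phi>_unit_norms_bdd: "bdd_above \<phi>_unit_norms"
proof -
  have "\<forall>e>0. \<exists>d>0. \<forall>w\<in>V. wnorm (wadd w (wscale (-1) wzero)) < d \<longrightarrow>
          op_norm (opadd (\<phi> w) (opscale (-1) (\<phi> wzero))) < e"
    using \<phi>_continuous zero_in_V unfolding kcontinuous_def by (simp del: W.scale_zero_right)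
  then obtain d where d: "d > 0" and near_zero: "\<And>w. w \<in> V \<Longrightarrow> wnorm (wadd w (wscale (-1) wzero)) < d \<Longrightarrow>
      op_norm (opadd (\<phi> w) (opscale (-1) (\<phi> wzero))) < 1"
    using zero_less_one by blast
  have opadd_zero: "opadd T (opscale (-1) zero_op) = T" for T
    by (simp add: fun_eq_iff opadd_def opscale_def)
  have small: "op_norm (\<phi> w) < 1" if "w \<in> V" "wnorm w < d" for w
    using near_zero[OF that(1)] that V_subset by (auto simp: \<phi>_zero opadd_zero)
  show ?thesis
  proof (rule bdd_aboveI[where M="2 / d"])
    fix r assume "r \<in> \<phi>_unit_norms"
    then obtain v where v: "v \<in> V" "wnorm v \<le> 1" "r = op_norm (\<phi> v)" by blast
    have "wnorm (wscale (of_real (d / 2)) v) = d / 2 * wnorm v"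
      using V_subset v(1) d by (auto simp: wnorm_scale)
    also have "\<dots> \<le> d / 2" using v(2) d by (simp add: mult_left_le)
    also have "\<dots> < d" using d by simp
    finally have "op_norm (\<phi> (wscale (of_real (d / 2)) v)) < 1" using small V_scale[OF v(1)] by blast
    hence "d / 2 * r < 1" using op_norm_\<phi>_scale[OF v(1), of "d / 2"] v(3) d by simp
    thus "r \<le> 2 / d" using d by (simp add: field_simps)
  qed
qed

lemma zero_in_\<phi>_unit_norms: "0 \<in> \<phi>_unit_norms"
  using zero_in_V by (force simp: \<phi>_zero op_norm_zero_op)

lemma \<phi>_norm_nonneg: "\<phi>_norm \<ge> 0"
  unfolding \<phi>_norm_eq by (rule cSup_upper[OF zero_in_\<phi>_unit_norms \<phi>_unit_norms_bdd])

lemma op_norm_\<phi>_le: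
  assumes v: "v \<in> V" shows "op_norm (\<phi> v) \<le> \<phi>_norm * wnorm v"
proof (cases "wnorm v = 0")
  case True
  hence "v = wzero" using wnorm_eq_zero_iff V_subset v by blast
  thus ?thesis by (simp add: \<phi>_zero op_norm_zero_op)
next
  case False
  hence pos: "wnorm v > 0" using wnorm_nonneg V_subset v by (simp add: order_neq_le_trans subset_iff)
  let ?u = "wscale (of_real (1 / wnorm v)) v"
  have "wnorm ?u = 1" using pos V_subset v by (auto simp: wnorm_scale norm_divide)
  hence "op_norm (\<phi> ?u) \<le> \<phi>_norm"
    unfolding \<phi>_norm_eq using V_scale[OF v] by (intro cSup_upper[OF _ \<phi>_unit_norms_bdd]) force
  moreover have "op_norm (\<phi> ?u) = op_norm (\<phi> v) / wnorm v"
    using op_norm_\<phi>_scale[OF v, of "1 / wnorm v"] pos by simp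
  ultimately show ?thesis using pos by (simp add: divide_le_eq mult.commute)
qed

lemma corner_extension:
  obtains F where "\<And>v. v \<in> V \<Longrightarrow> F v = \<phi> v (unit_vec 0) 0"
    and "\<And>v w. v \<in> WC \<Longrightarrow> w \<in> WC \<Longrightarrow> F (wadd v w) = F v + F w"
    and "\<And>c v. v \<in> WC \<Longrightarrow> F (wscale c v) = c * F v"
    and "\<And>v. v \<in> WC \<Longrightarrow> cmod (F v) \<le> \<phi>_norm * wnorm v"
proof -
  interpret seminormed_carrier_vs WC wadd wscale wzero "\<lambda>v. \<phi>_norm * wnorm v"
    using \<phi>_norm_nonneg
    by unfold_locales (simp_all add: wnorm_nonneg wnorm_scale wnorm_triangle distrib_left[symmetric]
        mult_left_mono)
  have "cmod (\<phi> v (unit_vec 0) 0) \<le> \<phi>_norm * wnorm v" if v: "v \<in> V" for v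
  proof -
    have b: "bounded_op (\<phi> v)" by (rule Kc_bounded[OF \<phi>_Kc[OF v]])
    have "cmod (\<phi> v (unit_vec 0) 0) \<le> l2_norm (\<phi> v (unit_vec 0))"
      by (rule l2_coord_le[OF bounded_opD(1)[OF b l2_unit_vec]])
    also have "\<dots> \<le> op_norm (\<phi> v)" by (rule op_norm_ge[OF b l2_unit_vec]) simp
    also have "\<dots> \<le> \<phi>_norm * wnorm v" by (rule op_norm_\<phi>_le[OF v])
    finally show ?thesis .
  qed
  thus ?thesis
    using that complex_hahn_banach[OF V_subset zero_in_V V_add V_scale, of "\<lambda>v. \<phi> v (unit_vec 0) 0"]
    by (simp add: \<phi>_add \<phi>_scale opadd_def opscale_def vadd_def vscale_def) blast
qed

lemma kmap_norm_extension:
  assumes ext: "\<And>v. v \<in> V \<Longrightarrow> \<psi> v = \<phi> v"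
    and bound: "\<And>w. w \<in> WC \<Longrightarrow> op_norm (\<psi> w) \<le> \<phi>_norm * wnorm w"
  shows "kmap_norm W \<psi> = \<phi>_norm"
proof -
  let ?S = "{op_norm (\<psi> w) | w. w \<in> WC \<and> wnorm w \<le> 1}"
  have le: "r \<le> \<phi>_norm" if "r \<in> ?S" for r
    using that bound \<phi>_norm_nonneg by (force intro: order_trans mult_left_le)
  have "\<phi>_unit_norms \<subseteq> ?S" using ext V_subset by force
  moreover have "bdd_above ?S" using le by (rule bdd_aboveI)
  ultimately have "\<phi>_norm \<le> Sup ?S"
    unfolding \<phi>_norm_eq using zero_in_\<phi>_unit_norms by (intro cSup_subset_mono) auto
  moreover have "Sup ?S \<le> \<phi>_norm" using le zero_in_\<phi>_unit_norms ext V_subset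
    by (intro cSup_least) force+
  ultimately show ?thesis by (simp add: kmap_norm_def)
qed

end

theorem proposition3p4:
  fixes W :: "'w kspace" and V :: "'w set" and \<phi> :: "'w \<Rightarrow> op"
  assumes "K_operator_space W"
    and "biK_invariant_subspace V W"
    and "K_operator_space (W\<lparr>kcarrier := V\<rparr>)"
    and "biK_linear_map (W\<lparr>kcarrier := V\<rparr>) \<phi>"
    and "kcontinuous (W\<lparr>kcarrier := V\<rparr>) \<phi>"
  shows "\<exists>\<psi>. biK_linear_map W \<psi> \<and> kcontinuous W \<psi> \<and> (\<forall>v\<in>V. \<psi> v = \<phi> v)
           \<and> kmap_norm W \<psi> = kmap_norm (W\<lparr>kcarrier := V\<rparr>) \<phi>"
proof -
  interpret K_extension W V \<phi>
    using assms(1,2,4,5) by unfold_locales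
  obtain F where F_corner: "\<And>v. v \<in> V \<Longrightarrow> F v = \<phi> v (unit_vec 0) 0"
    and F: "\<And>v w. v \<in> WC \<Longrightarrow> w \<in> WC \<Longrightarrow> F (wadd v w) = F v + F w"
      "\<And>c v. v \<in> WC \<Longrightarrow> F (wscale c v) = c * F v"
      "\<And>v. v \<in> WC \<Longrightarrow> cmod (F v) \<le> \<phi>_norm * wnorm v"
    using corner_extension by blast
  interpret K_functional W F \<phi>_norm
    using F \<phi>_norm_nonneg by unfold_locales
  have ext: "\<forall>v\<in>V. induced_op v = \<phi> v"
    using induced_op_eq_on_subspace[OF subspace \<phi>_linear F_corner] by blast
  show ?thesis
    using induced_op_biK_linear induced_op_kcontinuous ext
      kmap_norm_extension[of induced_op] op_norm_induced_op_le by blast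
qed

end
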